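(* Let $N\ge3$. For every marginal distribution $F$ as in the context, the Second Price Auction with $\mathrm{Beta}(\frac1{N-1},1)$ Distributed Reserves is not a maxmin auction among (all, not necessarily exclusive) DSIC and EPIR mechanisms.
   Context: A single indivisible good is sold to $N$ bidders with private values $v_i\in[0,1]$, each with the same marginal cdf $F$ on $[0,1]$ with support $[0,1]$. $\Pi(F)$ is the set of probability measures on $[0,1]^N$ with all one-dimensional marginals $F$. A mechanism $(q,t)$: $q:[0,1]^N\to[0,1]^N$ with $\sum_iq_i\le1$, $t:[0,1]^N\to\mathbb{R}^N$; DSIC: $v_iq_i(v)-t_i(v)\ge v_iq_i(v_i',v_{-i})-t_i(v_i',v_{-i})$ for all $i,v,v_i'$; EPIR: $v_iq_i(v)-t_i(v)\ge0$. A maxmin auction maximizes $\inf_{\pi\in\Pi(F)}\int\sum_it_i\,d\pi$ over the class of DSIC and EPIR mechanisms. Second Price Auction with $\mathrm{Beta}(\frac1{N-1},1)$ Distributed Reserves: with $v_{(1)},v_{(2)}$ the highest and second highest values, a unique highest bidder gets the good with probability $v_{(1)}^{1/(N-1)}$ and pays $\frac1Nv_{(1)}^{N/(N-1)}+\frac{N-1}Nv_{(2)}^{N/(N-1)}$; if $K\ge2$ bidders tie at $v_{(1)}$, each gets probability $v_{(1)}^{1/(N-1)}/K$ and pays $v_{(1)}^{N/(N-1)}/K$; all others get and pay nothing. *)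

theory Defs
  imports "HOL-Probability.Probability"
begin

definition profiles :: "nat \<Rightarrow> (nat \<Rightarrow> real) set" where
  "profiles N = PiE {..<N} (\<lambda>_. {0..1})"

definition profile_space :: "nat \<Rightarrow> (nat \<Rightarrow> real) measure" where
  "profile_space N = PiM {..<N} (\<lambda>_. borel)"

definition cdf_on_unit_with_full_support :: "(real \<Rightarrow> real) \<Rightarrow> bool" where
  "cdf_on_unit_with_full_support F \<longleftrightarrow>
     mono F \<and> (\<forall>x. continuous (at_right x) F) \<and>
     (\<forall>x<0. F x = 0) \<and> (\<forall>x\<ge>1. F x = 1) \<and>
     (\<forall>x\<in>{0..1}. \<forall>e>0. F (x - e) < F (x + e))"

definition Pi_F :: "nat \<Rightarrow> (real \<Rightarrow> real) \<Rightarrow> (nat \<Rightarrow> real) measure set" where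
  "Pi_F N F = {\<pi>. prob_space \<pi> \<and> sets \<pi> = sets (profile_space N) \<and>
     (\<forall>i<N. \<forall>x. measure \<pi> {v \<in> space \<pi>. v i \<le> x} = F x)}"

definition feasible ::
  "nat \<Rightarrow> ((nat \<Rightarrow> real) \<Rightarrow> nat \<Rightarrow> real) \<Rightarrow> bool" where
  "feasible N q \<longleftrightarrow> (\<forall>v\<in>profiles N.
     (\<forall>i<N. 0 \<le> q v i \<and> q v i \<le> 1) \<and> (\<Sum>i<N. q v i) \<le> 1)"

definition DSIC ::
  "nat \<Rightarrow> ((nat \<Rightarrow> real) \<Rightarrow> nat \<Rightarrow> real) \<Rightarrow> ((nat \<Rightarrow> real) \<Rightarrow> nat \<Rightarrow> real) \<Rightarrow> bool" where
  "DSIC N q t \<longleftrightarrow> (\<forall>v\<in>profiles N. \<forall>i<N. \<forall>w\<in>{0..1}.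
     v i * q v i - t v i \<ge> v i * q (v(i := w)) i - t (v(i := w)) i)"

definition EPIR ::
  "nat \<Rightarrow> ((nat \<Rightarrow> real) \<Rightarrow> nat \<Rightarrow> real) \<Rightarrow> ((nat \<Rightarrow> real) \<Rightarrow> nat \<Rightarrow> real) \<Rightarrow> bool" where
  "EPIR N q t \<longleftrightarrow> (\<forall>v\<in>profiles N. \<forall>i<N. v i * q v i - t v i \<ge> 0)"

definition admissible ::
  "nat \<Rightarrow> ((nat \<Rightarrow> real) \<Rightarrow> nat \<Rightarrow> real) \<Rightarrow> ((nat \<Rightarrow> real) \<Rightarrow> nat \<Rightarrow> real) \<Rightarrow> bool" where
  "admissible N q t \<longleftrightarrow> feasible N q \<and> DSIC N q t \<and> EPIR N q t \<and>
     (\<forall>i<N. (\<lambda>v. q v i) \<in> borel_measurable (profile_space N) \<and>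
            (\<lambda>v. t v i) \<in> borel_measurable (profile_space N))"

definition revenue ::
  "nat \<Rightarrow> ((nat \<Rightarrow> real) \<Rightarrow> nat \<Rightarrow> real) \<Rightarrow> (nat \<Rightarrow> real) measure \<Rightarrow> real" where
  "revenue N t \<pi> = (\<integral>v. (\<Sum>i<N. t v i) \<partial>\<pi>)"

text \<open>Worst-case expected revenue, in the extended reals (so that an
  unbounded-below family of revenues gives -\<infinity>).\<close>
definition worst_revenue ::
  "nat \<Rightarrow> (real \<Rightarrow> real) \<Rightarrow> ((nat \<Rightarrow> real) \<Rightarrow> nat \<Rightarrow> real) \<Rightarrow> ereal" where
  "worst_revenue N F t = (INF \<pi>\<in>Pi_F N F. ereal (revenue N t \<pi>))"

text \<open>Second price auction with Beta(1/(N-1),1) distributed reserves.\<close>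
definition top_val :: "nat \<Rightarrow> (nat \<Rightarrow> real) \<Rightarrow> real" where
  "top_val N v = Max (v ` {..<N})"

definition n_top :: "nat \<Rightarrow> (nat \<Rightarrow> real) \<Rightarrow> nat" where
  "n_top N v = card {j. j < N \<and> v j = top_val N v}"

definition second_val :: "nat \<Rightarrow> (nat \<Rightarrow> real) \<Rightarrow> nat \<Rightarrow> real" where
  "second_val N v i = Max (v ` ({..<N} - {i}))"

definition spa_q :: "nat \<Rightarrow> (nat \<Rightarrow> real) \<Rightarrow> nat \<Rightarrow> real" where
  "spa_q N v i =
     (if i < N \<and> v i = top_val N v then
        top_val N v powr (1 / (real N - 1)) / real (n_top N v)
      else 0)"

definition spa_t :: "nat \<Rightarrow> (nat \<Rightarrow> real) \<Rightarrow> nat \<Rightarrow> real" where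
  "spa_t N v i =
     (if i < N \<and> v i = top_val N v then
        (if n_top N v = 1 then
           1 / real N * top_val N v powr (real N / (real N - 1))
           + (real N - 1) / real N * second_val N v i powr (real N / (real N - 1))
         else top_val N v powr (real N / (real N - 1)) / real (n_top N v))
      else 0)"

end

theory Submission
  imports Defs
begin

text \<open>Write \<open>p = 1/(N-1)\<close> and \<open>\<phi>(x) = x\<^bsup>1+p\<^esup> / N\<close>. When all bidders have the same value drawn from \<open>F\<close>
  (the comonotone coupling) the second price auction with \<open>Beta(p, 1)\<close> distributed reserves earns
  exactly \<open>N \<integral>\<phi> dF\<close>, so its worst-case revenue is at most this. For small \<open>\<delta>\<close> we perturb it
  whenever the second highest competing value is at least \<open>\<delta>\<close>: the winner's allocation \<open>u\<^sup>p\<close> is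
  tilted down to \<open>u\<^sup>p - k (1 - u)\<close> for a small \<open>k\<close>, losers above the second highest competing
  value receive a small consolation allocation, and ties are broken generously. Every allocation curve is a subgradient
  of the corresponding utility, so the envelope formula yields a DSIC and EPIR mechanism. A case
  analysis of each value profile shows that its revenue is at least \<open>\<Sum>\<^sub>i \<phi>(v\<^sub>i) + gain(v\<^sub>i)\<close>,
  where \<open>gain\<close> rewards values in \<open>(\<delta>, 1/2]\<close> and penalises values in \<open>(0, \<delta>]\<close>. Since every
  coupling has marginals \<open>F\<close>, the worst-case revenue is at least \<open>N \<integral>(\<phi> + gain) dF\<close>, and
  \<open>\<integral>gain dF > 0\<close> for small \<open>\<delta>\<close> because \<open>F\<close> is right-continuous at \<open>0\<close> and has full support.\<close>

lemma Young_powr_one_plus: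
  fixes x y p :: real
  assumes "0 \<le> x" "0 \<le> y" "0 < p"
  shows "(1 + p) * (x * y powr p) \<le> x powr (1 + p) + p * y powr (1 + p)"
proof -
  have "x * y powr p \<le> x powr (1 + p) / (1 + p) + (y powr p) powr ((1 + p) / p) / ((1 + p) / p)"
    by (rule Youngs_inequality) (use assms in \<open>auto simp: field_simps\<close>)
  also have "(y powr p) powr ((1 + p) / p) = y powr (1 + p)"
    using assms by (simp add: powr_powr)
  also have "y powr (1 + p) / ((1 + p) / p) = p * y powr (1 + p) / (1 + p)"
    using assms by (simp add: field_simps)
  finally have "x * y powr p \<le> (x powr (1 + p) + p * y powr (1 + p)) / (1 + p)"
    by (simp add: add_divide_distrib)
  then show ?thesis
    using assms by (simp add: field_simps)
qed

lemma powr_le_affine: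
  fixes x p :: real
  assumes "0 \<le> x" "0 \<le> p" "p \<le> 1"
  shows "x powr p \<le> 1 - p * (1 - x)"
proof (cases "x = 0")
  case False
  then have "x powr p * 1 powr (1 - p) \<le> p * x + (1 - p) * 1"
    using assms by (intro Youngs_inequality_0) auto
  then show ?thesis by (simp add: algebra_simps)
qed (use assms in simp)

lemma powr_one_plus:
  fixes x p :: real
  assumes "0 \<le> x"
  shows "x powr (1 + p) = x * x powr p"
  using assms by (cases "x = 0") (auto simp: powr_add)

lemma powr_one_plus_diff_ge:
  fixes w x p :: real
  assumes "0 \<le> w" "w \<le> x" "0 \<le> p"
  shows "(x - w) * x powr p \<le> x powr (1 + p) - w powr (1 + p)"
proof -
  have "w * w powr p \<le> w * x powr p"
    using assms by (intro mult_left_mono powr_mono2) auto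
  then show ?thesis
    using assms by (simp add: powr_one_plus algebra_simps)
qed

section \<open>Subgradients and glued curves\<close>

text \<open>For an allocation curve \<open>Q\<close> and a utility curve \<open>U\<close>, this is incentive compatibility.\<close>
definition subgradient_on :: "real set \<Rightarrow> (real \<Rightarrow> real) \<Rightarrow> (real \<Rightarrow> real) \<Rightarrow> bool" where
  "subgradient_on S U Q \<longleftrightarrow> (\<forall>x\<in>S. \<forall>y\<in>S. U x + (y - x) * Q x \<le> U y)"

lemma subgradient_onD:
  "subgradient_on S U Q \<Longrightarrow> x \<in> S \<Longrightarrow> y \<in> S \<Longrightarrow> U x + (y - x) * Q x \<le> U y"
  by (auto simp: subgradient_on_def)

lemma subgradient_on_subset:
  "subgradient_on S U Q \<Longrightarrow> T \<subseteq> S \<Longrightarrow> subgradient_on T U Q"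
  by (auto simp: subgradient_on_def)

lemma subgradient_on_mono:
  assumes "subgradient_on S U Q" "x \<in> S" "y \<in> S" "x \<le> y"
  shows "Q x \<le> Q y"
proof (cases "x = y")
  case False
  have "(y - x) * Q x \<le> (y - x) * Q y"
    using subgradient_onD[OF assms(1,2,3)] subgradient_onD[OF assms(1,3,2)]
    by (simp add: algebra_simps)
  then show ?thesis using assms(4) False by simp
qed simp

lemma subgradient_on_add:
  assumes "subgradient_on S U Q" "subgradient_on S V R"
  shows "subgradient_on S (\<lambda>x. U x + V x) (\<lambda>x. Q x + R x)"
  unfolding subgradient_on_def
proof (intro ballI)
  fix x y assume "x \<in> S" "y \<in> S"
  then have "U x + (y - x) * Q x + (V x + (y - x) * R x) \<le> U y + V y"
    using assms by (intro add_mono subgradient_onD)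
  then show "U x + V x + (y - x) * (Q x + R x) \<le> U y + V y"
    by (simp add: algebra_simps)
qed

lemma subgradient_on_shift: "subgradient_on S U Q \<Longrightarrow> subgradient_on S (\<lambda>x. a + U x) Q"
  by (simp add: subgradient_on_def)

lemma subgradient_on_zero: "subgradient_on S (\<lambda>_. 0) (\<lambda>_. 0)"
  by (simp add: subgradient_on_def)

lemma subgradient_on_linear: "subgradient_on S (\<lambda>u. (u - s) * c) (\<lambda>_. c)"
  by (simp add: subgradient_on_def algebra_simps)

lemma subgradient_on_powr:
  assumes "0 < p"
  shows "subgradient_on {0..} (\<lambda>u. u powr (1 + p) / (1 + p)) (\<lambda>u. u powr p)"
  unfolding subgradient_on_def
proof (intro ballI)
  fix x y :: real assume "x \<in> {0..}" "y \<in> {0..}"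
  then have "(1 + p) * (y * x powr p) \<le> y powr (1 + p) + p * x powr (1 + p)"
    using assms by (intro Young_powr_one_plus) auto
  then have "x powr (1 + p) + (1 + p) * ((y - x) * x powr p) \<le> y powr (1 + p)"
    using \<open>x \<in> {0..}\<close> by (simp add: powr_one_plus algebra_simps)
  then have "(x powr (1 + p) + (1 + p) * ((y - x) * x powr p)) / (1 + p) \<le> y powr (1 + p) / (1 + p)"
    using assms by (intro divide_right_mono) auto
  then show "x powr (1 + p) / (1 + p) + (y - x) * x powr p \<le> y powr (1 + p) / (1 + p)"
    using assms by (simp add: add_divide_distrib)
qed

lemma subgradient_on_square:
  assumes "0 \<le> k"
  shows "subgradient_on S (\<lambda>u. k * (1 - u)\<^sup>2 / 2) (\<lambda>u. - (k * (1 - u)))"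
  unfolding subgradient_on_def
proof (intro ballI)
  fix x y :: real
  have "k * (1 - y)\<^sup>2 / 2 - (k * (1 - x)\<^sup>2 / 2 + (y - x) * - (k * (1 - x))) = k * (y - x)\<^sup>2 / 2"
    by (simp add: power2_eq_square field_simps)
  moreover have "0 \<le> k * (y - x)\<^sup>2 / 2" using assms by simp
  ultimately show "k * (1 - x)\<^sup>2 / 2 + (y - x) * - (k * (1 - x)) \<le> k * (1 - y)\<^sup>2 / 2"
    by linarith
qed

definition glue :: "real \<Rightarrow> real \<Rightarrow> (real \<Rightarrow> real) \<Rightarrow> (real \<Rightarrow> real) \<Rightarrow> real \<Rightarrow> real" where
  "glue m \<theta> f g u = (if u < m then f u else if u = m then \<theta> else g u)"

lemma subgradient_on_glue:
  assumes U1: "subgradient_on {x\<in>S. x \<le> m} U1 Q1" and U2: "subgradient_on {x\<in>S. m \<le> x} U2 Q2"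
    and m: "m \<in> S" and "U1 m = \<mu>" "U2 m = \<mu>" and \<theta>: "Q1 m \<le> \<theta>" "\<theta> \<le> Q2 m"
  shows "subgradient_on S (glue m \<mu> U1 U2) (glue m \<theta> Q1 Q2)"
  unfolding subgradient_on_def
proof (intro ballI)
  fix x y assume x: "x \<in> S" and y: "y \<in> S"
  let ?U = "glue m \<mu> U1 U2" and ?Q = "glue m \<theta> Q1 Q2"
  have U_low: "?U u = U1 u" if "u \<le> m" for u
    using that assms by (simp add: glue_def)
  have U_high: "?U u = U2 u" if "m \<le> u" for u
    using that assms by (simp add: glue_def)
  have low: "U1 u + (v - u) * ?Q u \<le> U1 v" if "u \<in> S" "v \<in> S" "u \<le> m" "v \<le> m" for u v
  proof (cases "u = m")
    case True
    have "(v - m) * \<theta> \<le> (v - m) * Q1 m" using \<theta> that by (intro mult_left_mono_neg) auto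
    then show ?thesis using subgradient_onD[OF U1, of m v] True that m by (simp add: glue_def)
  qed (use subgradient_onD[OF U1, of u v] that in \<open>simp add: glue_def\<close>)
  have high: "U2 u + (v - u) * ?Q u \<le> U2 v" if "u \<in> S" "v \<in> S" "m \<le> u" "m \<le> v" for u v
  proof (cases "u = m")
    case True
    have "(v - m) * \<theta> \<le> (v - m) * Q2 m" using \<theta> that by (intro mult_left_mono) auto
    then show ?thesis using subgradient_onD[OF U2, of m v] True that m by (simp add: glue_def)
  qed (use subgradient_onD[OF U2, of u v] that in \<open>simp add: glue_def\<close>)
  have Q_le: "?Q u \<le> \<theta>" if "u \<in> S" "u \<le> m" for u
    using subgradient_on_mono[OF U1, of u m] that m \<theta> by (auto simp: glue_def)
  have Q_ge: "\<theta> \<le> ?Q u" if "u \<in> S" "m \<le> u" for u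
    using subgradient_on_mono[OF U2, of m u] that m \<theta> by (auto simp: glue_def)
  consider "x \<le> m" "y \<le> m" | "m \<le> x" "m \<le> y" | "x \<le> m" "m < y" | "m < x" "y < m"
    by linarith
  then show "?U x + (y - x) * ?Q x \<le> ?U y"
  proof cases
    case 1
    then show ?thesis using low[OF x y] U_low by simp
  next
    case 2
    then show ?thesis using high[OF x y] U_high by simp
  next
    case 3
    have "(y - m) * ?Q x \<le> (y - m) * \<theta>" using 3 Q_le[OF x] by (intro mult_left_mono) auto
    then show ?thesis using low[OF x m] high[OF m y] 3 \<open>U1 m = \<mu>\<close> \<open>U2 m = \<mu>\<close> U_low U_high
      by (simp add: glue_def algebra_simps)
  next
    case 4
    have "(y - m) * ?Q x \<le> (y - m) * \<theta>" using 4 Q_ge[OF x] by (intro mult_left_mono_neg) auto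
    then show ?thesis using high[OF x m] low[OF m y] 4 \<open>U1 m = \<mu>\<close> \<open>U2 m = \<mu>\<close> U_low U_high
      by (simp add: glue_def algebra_simps)
  qed
qed

section \<open>The perturbed mechanism\<close>

definition tilted_pow :: "real \<Rightarrow> real \<Rightarrow> real \<Rightarrow> real" where
  "tilted_pow p k u = u powr p - k * (1 - u)"

definition tilted_area :: "real \<Rightarrow> real \<Rightarrow> real \<Rightarrow> real \<Rightarrow> real" where
  "tilted_area p k m u =
     (u powr (1 + p) - m powr (1 + p)) / (1 + p) + k * ((1 - u)\<^sup>2 - (1 - m)\<^sup>2) / 2"

lemma subgradient_on_tilted:
  assumes "0 < p" "0 \<le> k"
  shows "subgradient_on {0..} (tilted_area p k m) (tilted_pow p k)"
proof -
  have "subgradient_on {0..}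
      (\<lambda>u. - (m powr (1 + p) / (1 + p)) - k * (1 - m)\<^sup>2 / 2 + (u powr (1 + p) / (1 + p) + k * (1 - u)\<^sup>2 / 2))
      (\<lambda>u. u powr p + - (k * (1 - u)))"
    by (intro subgradient_on_shift subgradient_on_add subgradient_on_powr subgradient_on_square)
      (use assms in auto)
  moreover have "(\<lambda>u. - (m powr (1 + p) / (1 + p)) - k * (1 - m)\<^sup>2 / 2 + (u powr (1 + p) / (1 + p) + k * (1 - u)\<^sup>2 / 2))
      = tilted_area p k m"
    by (simp add: fun_eq_iff tilted_area_def diff_divide_distrib algebra_simps)
  moreover have "(\<lambda>u. u powr p + - (k * (1 - u))) = tilted_pow p k"
    by (simp add: fun_eq_iff tilted_pow_def)
  ultimately show ?thesis by simp
qed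

lemma tilted_area_self [simp]: "tilted_area p k m m = 0"
  by (simp add: tilted_area_def)

lemma tilted_pow_zero [simp]: "tilted_pow p 0 = (\<lambda>u. u powr p)"
  by (simp add: fun_eq_iff tilted_pow_def)

definition beta_exp :: "nat \<Rightarrow> real" where
  "beta_exp N = 1 / (real N - 1)"

definition pert :: "nat \<Rightarrow> real \<Rightarrow> real" where
  "pert N \<delta> = \<delta> powr beta_exp N / (4 * real N * (real N - 1))"

definition top_alloc :: "nat \<Rightarrow> real \<Rightarrow> real \<Rightarrow> real" where
  "top_alloc N \<delta> = tilted_pow (beta_exp N) (pert N \<delta> / 2)"

text \<open>The allocation at value \<open>u\<close> of a bidder whose highest and second highest competing values are
  \<open>m\<close> and \<open>s\<close>, and who ties with \<open>K - 1\<close> competitors at \<open>u = m\<close>. For \<open>s < \<delta>\<close> it is the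
  allocation of the second price auction with \<open>Beta(beta_exp N, 1)\<close> distributed reserve.\<close>
definition alloc :: "nat \<Rightarrow> real \<Rightarrow> real \<Rightarrow> real \<Rightarrow> real \<Rightarrow> real \<Rightarrow> real" where
  "alloc N \<delta> m s K =
     (if \<delta> \<le> s then
        glue m (top_alloc N \<delta> m * (2 - top_alloc N \<delta> m) / K)
          (glue s (pert N \<delta> * (1 - m)) (\<lambda>_. 0) (\<lambda>_. pert N \<delta> * (1 - m)))
          (top_alloc N \<delta>)
      else if \<delta> \<le> m then glue m (m powr beta_exp N / K) (\<lambda>_. 0) (\<lambda>u. u powr beta_exp N)
      else glue \<delta> (\<delta> powr beta_exp N) (\<lambda>_. 0) (\<lambda>u. u powr beta_exp N))"

text \<open>The integral of the allocation from \<open>0\<close> to \<open>u\<close>; by the envelope formula the payment is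
  \<open>u * alloc - utility\<close>.\<close>
definition utility :: "nat \<Rightarrow> real \<Rightarrow> real \<Rightarrow> real \<Rightarrow> real \<Rightarrow> real" where
  "utility N \<delta> m s =
     (if \<delta> \<le> s then
        glue m ((m - s) * (pert N \<delta> * (1 - m)))
          (glue s 0 (\<lambda>_. 0) (\<lambda>u. (u - s) * (pert N \<delta> * (1 - m))))
          (\<lambda>u. (m - s) * (pert N \<delta> * (1 - m)) + tilted_area (beta_exp N) (pert N \<delta> / 2) m u)
      else if \<delta> \<le> m then glue m 0 (\<lambda>_. 0) (tilted_area (beta_exp N) 0 m)
      else glue \<delta> 0 (\<lambda>_. 0) (tilted_area (beta_exp N) 0 \<delta>))"

lemma beta_exp_bounds: "N \<ge> 3 \<Longrightarrow> 0 < beta_exp N \<and> beta_exp N \<le> 1"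
  by (simp add: beta_exp_def)

lemma pert_pos: "N \<ge> 3 \<Longrightarrow> 0 < \<delta> \<Longrightarrow> 0 < pert N \<delta>"
  by (simp add: pert_def)

lemma four_N_pert: "N \<ge> 3 \<Longrightarrow> 4 * real N * pert N \<delta> = \<delta> powr beta_exp N / (real N - 1)"
  by (simp add: pert_def field_simps)

lemma top_alloc_bounds:
  assumes N: "N \<ge> 3" and \<delta>: "0 < \<delta>" "\<delta> \<le> m" "m \<le> 1"
  shows "\<delta> powr beta_exp N / 2 \<le> top_alloc N \<delta> m" "top_alloc N \<delta> m \<le> 1"
proof -
  let ?p = "beta_exp N"
  have p: "0 < ?p" "?p \<le> 1" using beta_exp_bounds[OF N] by auto
  have "4 * 1 * 1 \<le> 4 * real N * (real N - 1)" using N by (intro mult_mono) auto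
  then have "pert N \<delta> \<le> \<delta> powr ?p"
    unfolding pert_def by (simp add: divide_le_eq mult_le_cancel_left1)
  moreover have "pert N \<delta> / 2 * (1 - m) \<le> pert N \<delta> / 2"
    using \<delta> pert_pos[OF N \<delta>(1)] by (intro mult_left_le) auto
  ultimately have "pert N \<delta> / 2 * (1 - m) \<le> \<delta> powr ?p / 2" by linarith
  moreover have "\<delta> powr ?p \<le> m powr ?p" using \<delta> p by (intro powr_mono2) auto
  moreover have "0 \<le> pert N \<delta> / 2 * (1 - m)" using \<delta> pert_pos[OF N \<delta>(1)] by simp
  moreover have "m powr ?p \<le> 1" using \<delta> p by (intro powr_le1) auto
  ultimately show "\<delta> powr ?p / 2 \<le> top_alloc N \<delta> m" "top_alloc N \<delta> m \<le> 1"
    by (auto simp: top_alloc_def tilted_pow_def)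
qed

lemma tie_alloc_bounds:
  assumes N: "N \<ge> 3" and \<delta>: "0 < \<delta>" "\<delta> \<le> m" "m \<le> 1" and K: "2 \<le> K" "K \<le> real N"
  shows "pert N \<delta> * (1 - m) \<le> top_alloc N \<delta> m * (2 - top_alloc N \<delta> m) / K"
    and "top_alloc N \<delta> m * (2 - top_alloc N \<delta> m) / K \<le> top_alloc N \<delta> m"
proof -
  let ?T = "top_alloc N \<delta> m"
  have T: "\<delta> powr beta_exp N / 2 \<le> ?T" "?T \<le> 1" using top_alloc_bounds[OF N \<delta>] by auto
  have "0 \<le> \<delta> powr beta_exp N / 2" by simp
  then have T0: "0 \<le> ?T" using T(1) by linarith
  have "pert N \<delta> * (1 - m) \<le> pert N \<delta>"
    using pert_pos[OF N \<delta>(1)] \<delta> by (intro mult_left_le) auto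
  also have "pert N \<delta> \<le> ?T / real N"
  proof -
    have "real N * pert N \<delta> = \<delta> powr beta_exp N / (4 * (real N - 1))"
      using N by (simp add: pert_def field_simps)
    also have "\<dots> \<le> \<delta> powr beta_exp N / 2"
      using N by (intro divide_left_mono) auto
    finally show ?thesis using T N by (simp add: field_simps)
  qed
  also have "\<dots> \<le> ?T / K" using T0 K by (intro divide_left_mono) auto
  also have "\<dots> \<le> ?T * (2 - ?T) / K"
    using T0 T(2) K by (intro divide_right_mono) (auto simp: mult_le_cancel_left1)
  finally show "pert N \<delta> * (1 - m) \<le> ?T * (2 - ?T) / K" .
  have "?T * (2 - ?T) \<le> ?T * K" using T0 K by (intro mult_left_mono) auto
  then show "?T * (2 - ?T) / K \<le> ?T" using K by (simp add: divide_le_eq)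
qed

lemma subgradient_on_alloc:
  assumes N: "N \<ge> 3" and \<delta>: "0 < \<delta>" and sm: "0 \<le> s" "s \<le> m" "m \<le> 1"
    and K: "2 \<le> K" "K \<le> real N"
  shows "subgradient_on {0..} (utility N \<delta> m s) (alloc N \<delta> m s K)"
proof -
  let ?p = "beta_exp N"
  have "subgradient_on {x\<in>{0..}. a \<le> x} (tilted_area ?p 0 a) (tilted_pow ?p 0)" for a
    by (rule subgradient_on_subset[OF subgradient_on_tilted]) (use beta_exp_bounds[OF N] in auto)
  then have pow: "subgradient_on {x\<in>{0..}. a \<le> x} (tilted_area ?p 0 a) (\<lambda>u. u powr ?p)" for a
    by simp
  consider "\<delta> \<le> s" | "\<not> \<delta> \<le> s" "\<delta> \<le> m" | "m < \<delta>" by linarith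
  then show ?thesis
  proof cases
    case 1
    let ?c = "pert N \<delta> * (1 - m)"
    have c: "0 \<le> ?c" using pert_pos[OF N \<delta>] sm by simp
    have lower: "subgradient_on {x\<in>{0..}. x \<le> m}
        (glue s 0 (\<lambda>_. 0) (\<lambda>u. (u - s) * ?c)) (glue s ?c (\<lambda>_. 0) (\<lambda>_. ?c))"
      by (rule subgradient_on_glue) (use sm c in \<open>auto intro: subgradient_on_zero subgradient_on_linear\<close>)
    have upper: "subgradient_on {x\<in>{0..}. m \<le> x}
        (\<lambda>u. (m - s) * ?c + tilted_area ?p (pert N \<delta> / 2) m u) (top_alloc N \<delta>)"
      unfolding top_alloc_def using beta_exp_bounds[OF N] pert_pos[OF N \<delta>]
      by (intro subgradient_on_shift subgradient_on_subset[OF subgradient_on_tilted]) auto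
    have tie: "?c \<le> top_alloc N \<delta> m * (2 - top_alloc N \<delta> m) / K"
      "top_alloc N \<delta> m * (2 - top_alloc N \<delta> m) / K \<le> top_alloc N \<delta> m"
      using tie_alloc_bounds[OF N \<delta>, of m] 1 sm K by auto
    show ?thesis
      unfolding alloc_def utility_def using 1
      by (simp, intro subgradient_on_glue[OF lower upper]) (use sm tie in \<open>auto simp: glue_def\<close>)
  next
    case 2
    then show ?thesis
      unfolding alloc_def utility_def using sm K beta_exp_bounds[OF N]
      by (simp, intro subgradient_on_glue[OF subgradient_on_zero pow])
        (auto simp: divide_le_eq mult_le_cancel_left1)
  next
    case 3
    then show ?thesis
      unfolding alloc_def utility_def using sm \<delta>
      by (simp, intro subgradient_on_glue[OF subgradient_on_zero pow]) auto
  qed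
qed

lemma alloc_at_zero:
  assumes "0 < \<delta>" "0 \<le> s" "s \<le> m"
  shows "alloc N \<delta> m s K 0 = 0" "utility N \<delta> m s 0 = 0"
  using assms by (auto simp: alloc_def utility_def glue_def)

section \<open>Competing values\<close>

text \<open>Seen from bidder \<open>i\<close>, \<^const>\<open>second_val\<close> is the highest competing value, \<open>third_val\<close> the second
  highest one, and \<open>tie_count\<close> the number of bidders tied at the top if \<open>i\<close> matches the highest
  competing value.\<close>

definition third_val :: "nat \<Rightarrow> (nat \<Rightarrow> real) \<Rightarrow> nat \<Rightarrow> real" where
  "third_val N v i = Min ((\<lambda>j. Max (v ` ({..<N} - {i, j}))) ` ({..<N} - {i}))"

definition tie_count :: "nat \<Rightarrow> (nat \<Rightarrow> real) \<Rightarrow> nat \<Rightarrow> real" where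
  "tie_count N v i = 1 + (\<Sum>j\<in>{..<N} - {i}. if v j = second_val N v i then 1 else 0)"

lemma profiles_range: "v \<in> profiles N \<Longrightarrow> j < N \<Longrightarrow> 0 \<le> v j \<and> v j \<le> 1"
  by (auto simp: profiles_def PiE_def Pi_def)

lemma lessThan_remove_two_nonempty:
  fixes i j :: nat
  assumes "N \<ge> 3"
  shows "{..<N} - {i, j} \<noteq> {}"
proof -
  have "\<exists>k\<in>{0, 1, 2::nat}. k \<notin> {i, j}" by auto
  then obtain k where "k \<in> {0, 1, 2::nat}" "k \<notin> {i, j}" by blast
  then have "k \<in> {..<N} - {i, j}" using assms by auto
  then show ?thesis by blast
qed

lemma second_val_ge: "j < N \<Longrightarrow> j \<noteq> i \<Longrightarrow> v j \<le> second_val N v i"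
  unfolding second_val_def by (intro Max_ge) auto

lemma second_val_attained:
  assumes "N \<ge> 2"
  obtains j where "j < N" "j \<noteq> i" "v j = second_val N v i"
proof -
  have "(if i = 0 then 1 else 0) \<in> {..<N} - {i}" using assms by auto
  then have "second_val N v i \<in> v ` ({..<N} - {i})"
    unfolding second_val_def by (intro Max_in) auto
  then obtain j where "j \<in> {..<N} - {i}" "second_val N v i = v j" by blast
  then show ?thesis using that[of j] by simp
qed

lemma third_val_eq:
  assumes N: "N \<ge> 3" and j: "j < N" "j \<noteq> i" "v j = second_val N v i"
  shows "third_val N v i = Max (v ` ({..<N} - {i, j}))"
proof -
  let ?M = "\<lambda>j. Max (v ` ({..<N} - {i, j}))"
  have "?M j \<le> ?M j'" if "j' \<in> {..<N} - {i}" for j'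
  proof (cases "j' = j")
    case False
    have "?M j \<in> v ` ({..<N} - {i, j})"
      using lessThan_remove_two_nonempty[OF N] by (intro Max_in) auto
    then have "?M j \<le> v j" using j second_val_ge[of _ N i v] by auto
    also have "v j \<le> ?M j'" by (intro Max_ge) (use j(1,2) that False in auto)
    finally show ?thesis .
  qed simp
  moreover have "?M j \<in> ?M ` ({..<N} - {i})" using j by blast
  ultimately show ?thesis
    unfolding third_val_def by (intro Min_eqI) auto
qed

lemma third_val_ge:
  assumes "N \<ge> 3" "j < N" "j \<noteq> i" "v j = second_val N v i" "k < N" "k \<noteq> i" "k \<noteq> j"
  shows "v k \<le> third_val N v i"
  unfolding third_val_eq[OF assms(1-4)] using assms by (intro Max_ge) auto

lemma third_val_attained:
  assumes N: "N \<ge> 3" and j: "j < N" "j \<noteq> i" "v j = second_val N v i"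
  obtains k where "k < N" "k \<noteq> i" "k \<noteq> j" "v k = third_val N v i"
proof -
  have "Max (v ` ({..<N} - {i, j})) \<in> v ` ({..<N} - {i, j})"
    using lessThan_remove_two_nonempty[OF N] by (intro Max_in) auto
  then obtain k where "k \<in> {..<N} - {i, j}" "Max (v ` ({..<N} - {i, j})) = v k" by blast
  then show ?thesis using that[of k] third_val_eq[OF N j] by simp
qed

lemma third_val_le_second_val:
  assumes "N \<ge> 3" "i < N"
  shows "third_val N v i \<le> second_val N v i"
proof -
  obtain j where j: "j < N" "j \<noteq> i" "v j = second_val N v i"
    by (rule second_val_attained[of N i v]) (use assms in auto)
  obtain k where "k < N" "k \<noteq> i" "v k = third_val N v i"
    using third_val_attained[OF assms(1) j] by blast
  then show ?thesis using second_val_ge[of k N i v] by simp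
qed

lemma second_val_range:
  assumes "v \<in> profiles N" "N \<ge> 3"
  shows "0 \<le> second_val N v i \<and> second_val N v i \<le> 1"
proof -
  obtain j where "j < N" "v j = second_val N v i"
    by (rule second_val_attained[of N i v]) (use assms in auto)
  then show ?thesis using profiles_range[OF assms(1)] by metis
qed

lemma third_val_range:
  assumes "v \<in> profiles N" "N \<ge> 3" "i < N"
  shows "0 \<le> third_val N v i \<and> third_val N v i \<le> 1"
proof -
  obtain j where j: "j < N" "j \<noteq> i" "v j = second_val N v i"
    by (rule second_val_attained[of N i v]) (use assms in auto)
  obtain k where "k < N" "v k = third_val N v i"
    by (rule third_val_attained[OF assms(2) j])
  then show ?thesis using profiles_range[OF assms(1)] by metis
qed

lemma tie_count_bounds:
  assumes "N \<ge> 3" "i < N"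
  shows "2 \<le> tie_count N v i" "tie_count N v i \<le> real N"
proof -
  obtain j where j: "j < N" "j \<noteq> i" "v j = second_val N v i"
    by (rule second_val_attained[of N i v]) (use assms in auto)
  have "(\<Sum>k\<in>{j}. if v k = second_val N v i then 1 else (0::real))
      \<le> (\<Sum>k\<in>{..<N} - {i}. if v k = second_val N v i then 1 else 0)"
    using j by (intro sum_mono2) auto
  then show "2 \<le> tie_count N v i" using j by (simp add: tie_count_def)
  have "(\<Sum>k\<in>{..<N} - {i}. if v k = second_val N v i then 1 else 0) \<le> (\<Sum>k\<in>{..<N} - {i}. (1::real))"
    by (intro sum_mono) auto
  then show "tie_count N v i \<le> real N" using assms by (simp add: tie_count_def)
qed

lemma second_val_upd [simp]: "second_val N (v(i := w)) i = second_val N v i"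
proof -
  have "(v(i := w)) ` ({..<N} - {i}) = v ` ({..<N} - {i})" by auto
  then show ?thesis by (simp add: second_val_def)
qed

lemma third_val_upd [simp]: "third_val N (v(i := w)) i = third_val N v i"
proof -
  have "(v(i := w)) ` ({..<N} - {i, j}) = v ` ({..<N} - {i, j})" for j by auto
  then show ?thesis by (simp add: third_val_def)
qed

lemma tie_count_upd [simp]: "tie_count N (v(i := w)) i = tie_count N v i"
  unfolding tie_count_def second_val_upd by (intro arg_cong[where f = "\<lambda>x. 1 + x"] sum.cong) auto

lemma top_val_ge: "j < N \<Longrightarrow> v j \<le> top_val N v"
  unfolding top_val_def by (intro Max_ge) auto

lemma top_val_attained:
  assumes "0 < N"
  obtains i where "i < N" "v i = top_val N v"
proof -
  have "top_val N v \<in> v ` {..<N}" unfolding top_val_def using assms by (intro Max_in) auto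
  then show ?thesis using that by auto
qed

lemma second_val_le_top_val:
  assumes "N \<ge> 2"
  shows "second_val N v i \<le> top_val N v"
proof -
  obtain j where "j < N" "v j = second_val N v i"
    by (rule second_val_attained[OF assms])
  then show ?thesis using top_val_ge[of j N v] by simp
qed

lemma second_val_unique_top:
  assumes N: "N \<ge> 2" and i: "i < N" "v i = top_val N v"
    and unique: "\<And>j. j < N \<Longrightarrow> j \<noteq> i \<Longrightarrow> v j < top_val N v"
  shows "\<And>j. j < N \<Longrightarrow> j \<noteq> i \<Longrightarrow> second_val N v j = top_val N v"
    and "second_val N v i < top_val N v"
proof -
  fix j assume "j < N" "j \<noteq> i"
  then show "second_val N v j = top_val N v"
    using second_val_ge[of i N j v] second_val_le_top_val[OF N, of v j] i by simp
next
  obtain j where "j < N" "j \<noteq> i" "v j = second_val N v i"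
    by (rule second_val_attained[OF N])
  then show "second_val N v i < top_val N v" using unique by metis
qed

lemma second_val_tie:
  assumes N: "N \<ge> 2" and ties: "i < N" "i' < N" "i \<noteq> i'" "v i = top_val N v" "v i' = top_val N v"
    and j: "j < N"
  shows "second_val N v j = top_val N v"
proof -
  have "v i \<le> second_val N v j \<or> v i' \<le> second_val N v j"
    using second_val_ge[of i N j v] second_val_ge[of i' N j v] ties j by (cases "j = i") auto
  then show ?thesis using second_val_le_top_val[OF N, of v j] ties by auto
qed

lemma third_val_tie:
  assumes N: "N \<ge> 3" and ties: "i < N" "i' < N" "i \<noteq> i'" "v i = top_val N v" "v i' = top_val N v"
    and j: "j < N" "j \<noteq> i" "j \<noteq> i'"
  shows "third_val N v j = top_val N v"
proof -
  have second: "second_val N v j = top_val N v" using second_val_tie[OF _ ties j(1)] N by simp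
  have "v i' \<le> third_val N v j"
    by (rule third_val_ge[of N i j v i']) (use N ties j second in auto)
  then show ?thesis using third_val_le_second_val[OF N j(1), of v] second ties by simp
qed

lemma tie_count_top:
  assumes i: "i < N" "v i = top_val N v" and second: "second_val N v i = top_val N v"
  shows "tie_count N v i = real (card {j\<in>{..<N}. v j = top_val N v})"
proof -
  let ?A = "{j\<in>{..<N}. v j = top_val N v}"
  have "(\<Sum>j\<in>{..<N} - {i}. if v j = second_val N v i then 1 else (0::real)) = (\<Sum>j\<in>?A - {i}. 1)"
    using second by (intro sum.mono_neutral_cong_right) auto
  moreover have "i \<in> ?A" using i by simp
  then have "card (?A - {i}) = card ?A - 1" "card ?A \<ge> 1"
    by (auto simp: Suc_le_eq card_gt_0_iff)
  ultimately show ?thesis by (simp add: tie_count_def of_nat_diff)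
qed

section \<open>Incentives, participation and feasibility\<close>

definition perturbed_q :: "nat \<Rightarrow> real \<Rightarrow> (nat \<Rightarrow> real) \<Rightarrow> nat \<Rightarrow> real" where
  "perturbed_q N \<delta> v i =
     (if i < N then alloc N \<delta> (second_val N v i) (third_val N v i) (tie_count N v i) (v i) else 0)"

definition perturbed_t :: "nat \<Rightarrow> real \<Rightarrow> (nat \<Rightarrow> real) \<Rightarrow> nat \<Rightarrow> real" where
  "perturbed_t N \<delta> v i =
     (if i < N then v i * perturbed_q N \<delta> v i - utility N \<delta> (second_val N v i) (third_val N v i) (v i)
      else 0)"

lemma subgradient_on_bounds_from_zero:
  assumes "subgradient_on S U Q" "0 \<in> S" "u \<in> S" "U 0 = 0"
  shows "u * Q 0 \<le> U u" "U u \<le> u * Q u"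
  using subgradient_onD[OF assms(1,2,3)] subgradient_onD[OF assms(1,3,2)] assms(4) by simp_all

lemma subgradient_on_bidder:
  assumes "N \<ge> 3" "0 < \<delta>" "v \<in> profiles N" "i < N"
  shows "subgradient_on {0..} (utility N \<delta> (second_val N v i) (third_val N v i))
           (alloc N \<delta> (second_val N v i) (third_val N v i) (tie_count N v i))"
  using assms third_val_range second_val_range third_val_le_second_val tie_count_bounds
  by (intro subgradient_on_alloc) auto

lemma perturbed_DSIC:
  assumes "N \<ge> 3" "0 < \<delta>"
  shows "DSIC N (perturbed_q N \<delta>) (perturbed_t N \<delta>)"
  unfolding DSIC_def
proof (intro ballI allI impI)
  fix v i w assume v: "v \<in> profiles N" and i: "i < N" and w: "w \<in> {0..(1::real)}"
  have "utility N \<delta> (second_val N v i) (third_val N v i) w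
      + (v i - w) * alloc N \<delta> (second_val N v i) (third_val N v i) (tie_count N v i) w
      \<le> utility N \<delta> (second_val N v i) (third_val N v i) (v i)"
    using subgradient_onD[OF subgradient_on_bidder[OF assms v i]] w profiles_range[OF v i] by simp
  then show "v i * perturbed_q N \<delta> (v(i := w)) i - perturbed_t N \<delta> (v(i := w)) i
      \<le> v i * perturbed_q N \<delta> v i - perturbed_t N \<delta> v i"
    using i by (simp add: perturbed_q_def perturbed_t_def algebra_simps)
qed

lemma alloc_at_one:
  assumes N: "N \<ge> 3" and \<delta>: "0 < \<delta>" "\<delta> \<le> 1" and sm: "0 \<le> s" "s \<le> m" "m \<le> 1"
    and K: "2 \<le> K" "K \<le> real N"
  shows "alloc N \<delta> m s K 1 \<le> 1"
proof -
  have "top_alloc N \<delta> m * (2 - top_alloc N \<delta> m) / K \<le> 1" if "\<delta> \<le> m"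
    using tie_alloc_bounds(2)[OF N \<delta>(1) that sm(3) K] top_alloc_bounds(2)[OF N \<delta>(1) that sm(3)]
    by linarith
  moreover have "m powr beta_exp N / K \<le> 1"
    using sm K beta_exp_bounds[OF N] powr_le1[of "beta_exp N" m] by (simp add: divide_le_eq)
  ultimately show ?thesis
    using sm \<delta> by (auto simp: alloc_def glue_def top_alloc_def tilted_pow_def)
qed

lemma perturbed_q_bounds:
  assumes N: "N \<ge> 3" and \<delta>: "0 < \<delta>" "\<delta> \<le> 1" and v: "v \<in> profiles N"
  shows "0 \<le> perturbed_q N \<delta> v i \<and> perturbed_q N \<delta> v i \<le> 1"
proof (cases "i < N")
  case i: True
  let ?Q = "alloc N \<delta> (second_val N v i) (third_val N v i) (tie_count N v i)"
  have sub: "subgradient_on {0..} (utility N \<delta> (second_val N v i) (third_val N v i)) ?Q"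
    using subgradient_on_bidder[OF N \<delta>(1) v i] .
  have u: "0 \<le> v i" "v i \<le> 1" using profiles_range[OF v i] by auto
  have "?Q 0 \<le> ?Q (v i)" "?Q (v i) \<le> ?Q 1"
    using subgradient_on_mono[OF sub] u by auto
  moreover have "?Q 0 = 0"
    using alloc_at_zero \<delta> third_val_range[OF v N i] third_val_le_second_val[OF N i] by auto
  moreover have "?Q 1 \<le> 1"
    using alloc_at_one[OF N \<delta>] third_val_range[OF v N i] third_val_le_second_val[OF N i]
      second_val_range[OF v N] tie_count_bounds[OF N i] by auto
  ultimately show ?thesis using i by (simp add: perturbed_q_def)
qed (simp add: perturbed_q_def)

lemma perturbed_utility_bounds:
  assumes N: "N \<ge> 3" and \<delta>: "0 < \<delta>" and v: "v \<in> profiles N" and i: "i < N"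
  shows "0 \<le> utility N \<delta> (second_val N v i) (third_val N v i) (v i)"
    and "utility N \<delta> (second_val N v i) (third_val N v i) (v i) \<le> v i * perturbed_q N \<delta> v i"
proof -
  have zero: "alloc N \<delta> (second_val N v i) (third_val N v i) (tie_count N v i) 0 = 0"
    "utility N \<delta> (second_val N v i) (third_val N v i) 0 = 0"
    using alloc_at_zero \<delta> third_val_range[OF v N i] third_val_le_second_val[OF N i] by auto
  note bounds = subgradient_on_bounds_from_zero[OF subgradient_on_bidder[OF N \<delta> v i] _ _ zero(2)]
  show "0 \<le> utility N \<delta> (second_val N v i) (third_val N v i) (v i)"
    using bounds(1)[of "v i"] zero(1) profiles_range[OF v i] by simp
  show "utility N \<delta> (second_val N v i) (third_val N v i) (v i) \<le> v i * perturbed_q N \<delta> v i"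
    using bounds(2)[of "v i"] profiles_range[OF v i] i by (simp add: perturbed_q_def)
qed

lemma perturbed_EPIR: "N \<ge> 3 \<Longrightarrow> 0 < \<delta> \<Longrightarrow> EPIR N (perturbed_q N \<delta>) (perturbed_t N \<delta>)"
  using perturbed_utility_bounds(1) by (simp add: EPIR_def perturbed_t_def)

lemma perturbed_t_bounds:
  assumes "N \<ge> 3" "0 < \<delta>" "\<delta> \<le> 1" "v \<in> profiles N"
  shows "0 \<le> perturbed_t N \<delta> v i \<and> perturbed_t N \<delta> v i \<le> 1"
proof (cases "i < N")
  case True
  have "v i * perturbed_q N \<delta> v i \<le> 1"
    using perturbed_q_bounds[OF assms, of i] profiles_range[OF assms(4) True] by (auto intro: mult_le_one)
  then show ?thesis
    using perturbed_utility_bounds[OF assms(1,2,4) True] True by (simp add: perturbed_t_def)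
qed (simp add: perturbed_t_def)

lemma alloc_below:
  assumes "u < m" "0 < \<delta>"
  shows "alloc N \<delta> m s K u = (if \<delta> \<le> s \<and> s \<le> u then pert N \<delta> * (1 - m) else 0)"
  using assms by (auto simp: alloc_def glue_def)

lemma alloc_above_le:
  assumes "N \<ge> 3" "0 < \<delta>" "m < u" "u \<le> 1"
  shows "alloc N \<delta> m s K u \<le> u powr beta_exp N"
  using assms pert_pos[of N \<delta>] by (auto simp: alloc_def glue_def top_alloc_def tilted_pow_def)

lemma alloc_at_tie:
  assumes N: "N \<ge> 3" and \<delta>: "0 < \<delta>" and m: "m \<le> 1" and K: "2 \<le> K"
  shows "alloc N \<delta> m s K m \<le> 1 / K"
proof -
  let ?T = "top_alloc N \<delta> m"
  have "?T * (2 - ?T) \<le> 1"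
    using zero_le_power2[of "1 - ?T"] by (simp add: power2_eq_square algebra_simps)
  moreover have "m powr beta_exp N \<le> 1" if "0 \<le> m"
    using that m beta_exp_bounds[OF N] by (intro powr_le1) auto
  ultimately show ?thesis
    using \<delta> K by (auto simp: alloc_def glue_def divide_right_mono)
qed

lemma N_minus_one_pert_le:
  assumes N: "N \<ge> 3" and \<delta>: "0 < \<delta>" "\<delta> \<le> 1"
  shows "(real N - 1) * pert N \<delta> \<le> beta_exp N"
proof -
  have "\<delta> powr beta_exp N \<le> 1" using \<delta> beta_exp_bounds[OF N] by (intro powr_le1) auto
  have "(real N - 1) * pert N \<delta> = \<delta> powr beta_exp N / (4 * real N)"
    using N by (simp add: pert_def field_simps)
  also have "\<dots> \<le> 1 / (4 * real N)"
    using \<open>\<delta> powr beta_exp N \<le> 1\<close> by (intro divide_right_mono) auto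
  also have "\<dots> \<le> beta_exp N" using N by (simp add: beta_exp_def field_simps)
  finally show ?thesis .
qed

lemma sum_perturbed_q_unique_top:
  assumes N: "N \<ge> 3" and \<delta>: "0 < \<delta>" "\<delta> \<le> 1" and v: "v \<in> profiles N"
    and i: "i < N" "v i = top_val N v" and unique: "\<And>j. j < N \<Longrightarrow> j \<noteq> i \<Longrightarrow> v j < top_val N v"
  shows "(\<Sum>j<N. perturbed_q N \<delta> v j) \<le> 1"
proof -
  let ?M = "top_val N v" and ?p = "beta_exp N" and ?c = "pert N \<delta> * (1 - top_val N v)"
  have M: "0 \<le> ?M" "?M \<le> 1" using profiles_range[OF v i(1)] i by auto
  have c: "0 \<le> ?c" using pert_pos[OF N \<delta>(1)] M by simp
  have "perturbed_q N \<delta> v i \<le> ?M powr ?p"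
    using alloc_above_le[OF N \<delta>(1)] second_val_unique_top(2)[OF _ i unique] N i M
    by (simp add: perturbed_q_def)
  moreover have "perturbed_q N \<delta> v j \<le> ?c" if "j < N" "j \<noteq> i" for j
    using alloc_below[OF _ \<delta>(1)] second_val_unique_top(1)[OF _ i unique that] unique[OF that] N that c
    by (simp add: perturbed_q_def)
  then have "(\<Sum>j\<in>{..<N} - {i}. perturbed_q N \<delta> v j) \<le> (real N - 1) * ?c"
    using sum_mono[of "{..<N} - {i}" "perturbed_q N \<delta> v" "\<lambda>_. ?c"] i by (simp add: of_nat_diff)
  moreover have "(real N - 1) * ?c \<le> ?p * (1 - ?M)"
    using N_minus_one_pert_le[OF N \<delta>] M by (simp add: mult.assoc[symmetric] mult_right_mono)
  moreover have "?M powr ?p \<le> 1 - ?p * (1 - ?M)"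
    using powr_le_affine M beta_exp_bounds[OF N] by simp
  ultimately show ?thesis
    using sum.remove[of "{..<N}" i "perturbed_q N \<delta> v"] i by simp
qed

lemma sum_perturbed_q_tie:
  assumes N: "N \<ge> 3" and \<delta>: "0 < \<delta>" and v: "v \<in> profiles N"
    and ties: "i < N" "i' < N" "i \<noteq> i'" "v i = top_val N v" "v i' = top_val N v"
  shows "(\<Sum>j<N. perturbed_q N \<delta> v j) \<le> 1"
proof -
  let ?M = "top_val N v"
  define A where "A = {j\<in>{..<N}. v j = ?M}"
  have second: "second_val N v j = ?M" if "j < N" for j
    using second_val_tie[OF _ ties that] N by simp
  have A: "finite A" "i \<in> A" "A \<subseteq> {..<N}" using ties by (auto simp: A_def)
  have "perturbed_q N \<delta> v j = 0" if "j < N" "j \<notin> A" for j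
  proof -
    have "j \<noteq> i" "j \<noteq> i'" "v j < ?M" using that ties top_val_ge[of j N v] by (auto simp: A_def)
    then show ?thesis
      using alloc_below[OF _ \<delta>] second[OF that(1)] third_val_tie[OF N ties that(1)] that(1)
      by (simp add: perturbed_q_def)
  qed
  then have "(\<Sum>j<N. perturbed_q N \<delta> v j) = (\<Sum>j\<in>A. perturbed_q N \<delta> v j)"
    using A by (intro sum.mono_neutral_right) auto
  also have "\<dots> \<le> (\<Sum>j\<in>A. 1 / real (card A))"
  proof (intro sum_mono)
    fix j assume "j \<in> A"
    then have j: "j < N" "v j = ?M" by (auto simp: A_def)
    have "alloc N \<delta> ?M (third_val N v j) (tie_count N v j) ?M \<le> 1 / tie_count N v j"
      by (rule alloc_at_tie[OF N \<delta>]) (use j profiles_range[OF v j(1)] tie_count_bounds[OF N j(1)] in auto)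
    then show "perturbed_q N \<delta> v j \<le> 1 / real (card A)"
      using tie_count_top[OF j second[OF j(1)]] second[OF j(1)] j by (simp add: perturbed_q_def A_def)
  qed
  also have "\<dots> = 1" using A by (auto simp: card_gt_0_iff)
  finally show ?thesis .
qed

lemma perturbed_feasible:
  assumes N: "N \<ge> 3" and \<delta>: "0 < \<delta>" "\<delta> \<le> 1"
  shows "feasible N (perturbed_q N \<delta>)"
  unfolding feasible_def
proof (intro ballI conjI allI impI)
  fix v assume v: "v \<in> profiles N"
  show "0 \<le> perturbed_q N \<delta> v i" "perturbed_q N \<delta> v i \<le> 1" for i
    using perturbed_q_bounds[OF N \<delta> v] by auto
  obtain i where i: "i < N" "v i = top_val N v" using top_val_attained[of N v] N by auto
  show "(\<Sum>i<N. perturbed_q N \<delta> v i) \<le> 1"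
  proof (cases "\<forall>j<N. j \<noteq> i \<longrightarrow> v j < top_val N v")
    case True
    then show ?thesis using sum_perturbed_q_unique_top[OF N \<delta> v i] by blast
  next
    case False
    then obtain i' where "i' < N" "i' \<noteq> i" "v i' = top_val N v"
      using top_val_ge[of _ N v] by force
    then show ?thesis using sum_perturbed_q_tie[OF N \<delta>(1) v i(1)] i by metis
  qed
qed

lemma measurable_coordinate [measurable]:
  "j < N \<Longrightarrow> (\<lambda>v. v j) \<in> borel_measurable (profile_space N)"
  unfolding profile_space_def by (intro measurable_component_singleton) auto

lemma measurable_second_val [measurable]: "(\<lambda>v. second_val N v i) \<in> borel_measurable (profile_space N)"
  unfolding second_val_def by (intro borel_measurable_Max) auto

lemma measurable_third_val [measurable]: "(\<lambda>v. third_val N v i) \<in> borel_measurable (profile_space N)"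
  unfolding third_val_def by (intro borel_measurable_Min borel_measurable_Max) auto

lemma measurable_tie_count [measurable]: "(\<lambda>v. tie_count N v i) \<in> borel_measurable (profile_space N)"
  unfolding tie_count_def by measurable

lemma measurable_alloc [measurable]:
  assumes [measurable]: "f \<in> borel_measurable M" "g \<in> borel_measurable M" "h \<in> borel_measurable M"
    "u \<in> borel_measurable M"
  shows "(\<lambda>x. alloc N \<delta> (f x) (g x) (h x) (u x)) \<in> borel_measurable M"
    and "(\<lambda>x. utility N \<delta> (f x) (g x) (u x)) \<in> borel_measurable M"
  unfolding alloc_def utility_def if_distribR glue_def top_alloc_def tilted_pow_def tilted_area_def
  by measurable

lemma measurable_perturbed_q [measurable]:
  "(\<lambda>v. perturbed_q N \<delta> v i) \<in> borel_measurable (profile_space N)"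
proof (cases "i < N")
  case True
  note [measurable] = measurable_coordinate[OF True]
  show ?thesis unfolding perturbed_q_def using True by simp measurable
qed (simp add: perturbed_q_def)

lemma measurable_perturbed_t [measurable]:
  "(\<lambda>v. perturbed_t N \<delta> v i) \<in> borel_measurable (profile_space N)"
proof (cases "i < N")
  case True
  note [measurable] = measurable_coordinate[OF True]
  show ?thesis unfolding perturbed_t_def using True by simp measurable
qed (simp add: perturbed_t_def)

lemma perturbed_admissible:
  assumes "N \<ge> 3" "0 < \<delta>" "\<delta> \<le> 1"
  shows "admissible N (perturbed_q N \<delta>) (perturbed_t N \<delta>)"
  using perturbed_feasible perturbed_DSIC perturbed_EPIR assms by (simp add: admissible_def)

section \<open>A pointwise revenue bound\<close>

definition pay :: "nat \<Rightarrow> real \<Rightarrow> real \<Rightarrow> real \<Rightarrow> real \<Rightarrow> real \<Rightarrow> real" where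
  "pay N \<delta> m s K u = u * alloc N \<delta> m s K u - utility N \<delta> m s u"

definition spa_share :: "nat \<Rightarrow> real \<Rightarrow> real" where
  "spa_share N x = x powr (1 + beta_exp N) / real N"

lemma perturbed_t_eq_pay:
  "i < N \<Longrightarrow> perturbed_t N \<delta> v i = pay N \<delta> (second_val N v i) (third_val N v i) (tie_count N v i) (v i)"
  by (simp add: perturbed_t_def perturbed_q_def pay_def)

lemma inverse_one_plus_beta_exp: "N \<ge> 3 \<Longrightarrow> y / (1 + beta_exp N) = (real N - 1) * (y / real N)"
  by (simp add: beta_exp_def field_simps)

lemma mult_powr_beta_exp: "0 < N \<Longrightarrow> 0 \<le> u \<Longrightarrow> u * u powr beta_exp N = real N * spa_share N u"
  using powr_one_plus[of u "beta_exp N"] by (simp add: spa_share_def)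

lemma pay_below:
  assumes "u < m" "0 < \<delta>"
  shows "pay N \<delta> m s K u = (if \<delta> \<le> s \<and> s \<le> u then s * (pert N \<delta> * (1 - m)) else 0)"
  using assms by (auto simp: pay_def alloc_def utility_def glue_def algebra_simps)

lemma pay_above_active:
  assumes N: "N \<ge> 3" and "m < u" "0 \<le> u" "\<delta> \<le> s"
  shows "pay N \<delta> m s K u = spa_share N u + (real N - 1) * spa_share N m
      + pert N \<delta> / 4 * ((1 - m)\<^sup>2 - (1 - u\<^sup>2)) - (m - s) * (pert N \<delta> * (1 - m))"
proof -
  have "pay N \<delta> m s K u = u * (u powr beta_exp N) - pert N \<delta> / 2 * u * (1 - u)
      - ((m - s) * (pert N \<delta> * (1 - m)) + tilted_area (beta_exp N) (pert N \<delta> / 2) m u)"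
    using assms by (simp add: pay_def alloc_def utility_def glue_def top_alloc_def tilted_pow_def algebra_simps)
  also have "tilted_area (beta_exp N) (pert N \<delta> / 2) m u = (real N - 1) * (spa_share N u - spa_share N m)
      + pert N \<delta> / 2 * ((1 - u)\<^sup>2 - (1 - m)\<^sup>2) / 2"
    unfolding tilted_area_def inverse_one_plus_beta_exp[OF N] by (simp add: spa_share_def diff_divide_distrib)
  finally show ?thesis
    using mult_powr_beta_exp[of N u] assms by (simp add: power2_eq_square field_simps)
qed

lemma pay_above_spa:
  assumes N: "N \<ge> 3" and "m < u" "0 \<le> u" "\<not> \<delta> \<le> s"
  shows "pay N \<delta> m s K u = (if u < \<delta> then 0 else spa_share N u + (real N - 1) * spa_share N (max m \<delta>))"
proof -
  have area: "tilted_area (beta_exp N) 0 a u = (real N - 1) * (spa_share N u - spa_share N a)" for a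
    unfolding tilted_area_def inverse_one_plus_beta_exp[OF N] by (simp add: spa_share_def diff_divide_distrib)
  have "u * u powr beta_exp N = spa_share N u + (real N - 1) * spa_share N u"
    using mult_powr_beta_exp[of N u] assms by (simp add: algebra_simps)
  then show ?thesis
    using assms area by (auto simp: pay_def alloc_def utility_def glue_def max_def algebra_simps)
qed

lemma pay_tie:
  assumes "0 < \<delta>" "s \<le> m"
  shows "pay N \<delta> m s K m =
    (if \<delta> \<le> s then m * (top_alloc N \<delta> m * (2 - top_alloc N \<delta> m) / K) - (m - s) * (pert N \<delta> * (1 - m))
     else if \<delta> \<le> m then m * (m powr beta_exp N / K) else 0)"
  using assms by (auto simp: pay_def alloc_def utility_def glue_def)

definition reward :: "nat \<Rightarrow> real \<Rightarrow> real" where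
  "reward N \<delta> = \<delta> powr (1 + beta_exp N) / (32 * real N * real N * (real N - 1))"

definition gain :: "nat \<Rightarrow> real \<Rightarrow> real \<Rightarrow> real" where
  "gain N \<delta> x =
     (if \<delta> < x \<and> x \<le> 1/2 then reward N \<delta> else if 0 < x \<and> x \<le> \<delta> then - spa_share N \<delta> else 0)"

lemma spa_share_nonneg: "0 \<le> spa_share N x"
  by (simp add: spa_share_def)

lemma spa_share_mono: "N \<ge> 3 \<Longrightarrow> 0 \<le> x \<Longrightarrow> x \<le> y \<Longrightarrow> spa_share N x \<le> spa_share N y"
  unfolding spa_share_def using beta_exp_bounds[of N]
  by (intro divide_right_mono powr_mono2) auto

lemma spa_share_le_one: "N \<ge> 3 \<Longrightarrow> 0 \<le> x \<Longrightarrow> x \<le> 1 \<Longrightarrow> spa_share N x \<le> 1"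
  using spa_share_mono[of N x 1] by (simp add: spa_share_def divide_le_eq)

lemma reward_bounds:
  assumes N: "N \<ge> 3" and \<delta>: "0 < \<delta>" "\<delta> \<le> 1"
  shows "0 \<le> reward N \<delta>"
    and "real N * reward N \<delta> = pert N \<delta> * \<delta> / 8"
    and "real N * reward N \<delta> \<le> 3 / (32 * real N)"
    and "real N * reward N \<delta> \<le> beta_exp N * \<delta> powr (1 + beta_exp N) / 8"
    and "2 * reward N \<delta> \<le> (real N - 2) * spa_share N \<delta>"
proof -
  let ?d = "\<delta> powr (1 + beta_exp N)"
  have d: "0 < ?d" "?d \<le> 1" using \<delta> beta_exp_bounds[OF N] by (auto intro: powr_le1)
  have NR: "real N * reward N \<delta> = ?d / (32 * real N * (real N - 1))"
    using N by (simp add: reward_def field_simps)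
  show "0 \<le> reward N \<delta>" using d N by (simp add: reward_def)
  show "real N * reward N \<delta> = pert N \<delta> * \<delta> / 8"
    unfolding NR pert_def powr_one_plus[OF less_imp_le[OF \<delta>(1)]] by (simp add: field_simps)
  have "?d / (32 * real N * (real N - 1)) \<le> 1 / (32 * real N * (real N - 1))"
    using d N by (intro divide_right_mono) auto
  also have "\<dots> \<le> 3 / (32 * real N)" using N by (simp add: field_simps)
  finally show "real N * reward N \<delta> \<le> 3 / (32 * real N)" unfolding NR .
  have "8 * (real N - 1) \<le> (32 * real N) * (real N - 1)" using N by (intro mult_right_mono) auto
  then have "?d / (32 * real N * (real N - 1)) \<le> ?d / (8 * (real N - 1))"
    using d N by (intro divide_left_mono) auto
  also have "?d / (8 * (real N - 1)) = beta_exp N * ?d / 8" by (simp add: beta_exp_def)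
  finally show "real N * reward N \<delta> \<le> beta_exp N * ?d / 8" unfolding NR .
  have "32 * 1 * 1 \<le> 32 * real N * (real N - 1)" using N by (intro mult_mono) auto
  then have "2 / (32 * real N * (real N - 1)) \<le> 1" using N by (simp add: divide_le_eq)
  then have "2 / (32 * real N * (real N - 1)) \<le> real N - 2" using N by linarith
  then have "?d / real N * (2 / (32 * real N * (real N - 1))) \<le> ?d / real N * (real N - 2)"
    using d by (intro mult_left_mono) auto
  then show "2 * reward N \<delta> \<le> (real N - 2) * spa_share N \<delta>"
    by (simp add: reward_def spa_share_def ac_simps)
qed

lemma gain_le_reward: "N \<ge> 3 \<Longrightarrow> 0 < \<delta> \<Longrightarrow> \<delta> \<le> 1 \<Longrightarrow> gain N \<delta> x \<le> reward N \<delta>"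
  using reward_bounds(1)[of N \<delta>] spa_share_nonneg[of N \<delta>] by (auto simp: gain_def)

lemma gain_nonpos: "0 < \<delta> \<Longrightarrow> \<not> (\<delta> < x \<and> x \<le> 1/2) \<Longrightarrow> gain N \<delta> x \<le> 0"
  using spa_share_nonneg[of N \<delta>] by (auto simp: gain_def)

lemma spa_share_plus_gain_nonpos:
  assumes "N \<ge> 3" "0 \<le> x" "x \<le> \<delta>"
  shows "spa_share N x + gain N \<delta> x \<le> 0"
  using spa_share_mono[OF assms] assms by (auto simp: gain_def spa_share_def)

lemma spa_share_far_gap:
  assumes N: "N \<ge> 3" and w: "0 \<le> w" "w \<le> 1/2" and x: "3/4 < x" "x \<le> 1"
  shows "3 / (16 * real N) \<le> spa_share N x - spa_share N w"
proof -
  let ?p = "beta_exp N"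
  have p: "0 < ?p" "?p \<le> 1" using beta_exp_bounds[OF N] by auto
  have "(3/4::real) powr 1 \<le> (3/4) powr ?p" using p by (intro powr_mono') auto
  also have "\<dots> \<le> x powr ?p" using x p by (intro powr_mono2) auto
  finally have "1/4 * (3/4) \<le> (x - w) * x powr ?p" using w x by (intro mult_mono) auto
  also have "\<dots> \<le> x powr (1 + ?p) - w powr (1 + ?p)" using w x p by (intro powr_one_plus_diff_ge) auto
  finally show ?thesis using N by (simp add: spa_share_def field_simps)
qed

lemma rent_le_spa_share_gap:
  assumes N: "N \<ge> 3" and \<delta>: "0 < \<delta>" "\<delta> \<le> x" and s: "0 \<le> s" "s \<le> x"
  shows "4 * (pert N \<delta> * (x - s)) \<le> spa_share N x - spa_share N s"
proof -
  let ?p = "beta_exp N"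
  have "4 * real N * pert N \<delta> \<le> \<delta> powr ?p"
    unfolding four_N_pert[OF N] using N by (simp add: divide_le_eq mult_le_cancel_left1)
  also have "\<dots> \<le> x powr ?p" using \<delta> beta_exp_bounds[OF N] by (intro powr_mono2) auto
  finally have "(x - s) * (4 * real N * pert N \<delta>) \<le> (x - s) * x powr ?p"
    using s by (intro mult_left_mono) auto
  also have "\<dots> \<le> x powr (1 + ?p) - s powr (1 + ?p)"
    using s beta_exp_bounds[OF N] by (intro powr_one_plus_diff_ge) auto
  finally show ?thesis using N by (simp add: spa_share_def field_simps)
qed

lemma sum_gain_le:
  fixes y :: real
  assumes N: "N \<ge> 3" and \<delta>: "0 < \<delta>" "\<delta> \<le> 1" and S: "0 \<le> S" and G: "0 \<le> G"
    and near: "y \<le> 3/4 \<Longrightarrow> real N * reward N \<delta> \<le> G"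
    and far: "\<And>j. j < N \<Longrightarrow> v j \<le> 1/2 \<Longrightarrow> 3/4 < y \<Longrightarrow> 3 / (16 * real N) \<le> S"
  shows "(\<Sum>j<N. gain N \<delta> (v j)) \<le> S / 2 + G"
proof (cases "\<exists>j<N. \<delta> < v j \<and> v j \<le> 1/2")
  case False
  then have "(\<Sum>j<N. gain N \<delta> (v j)) \<le> 0" using gain_nonpos[OF \<delta>(1)] by (intro sum_nonpos) auto
  then show ?thesis using S G by linarith
next
  case True
  then obtain j where j: "j < N" "v j \<le> 1/2" by blast
  have "(\<Sum>j<N. gain N \<delta> (v j)) \<le> (\<Sum>j<N. reward N \<delta>)"
    using gain_le_reward[OF N \<delta>] by (intro sum_mono) auto
  moreover have "real N * reward N \<delta> \<le> S / 2 + G"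
  proof (cases "y \<le> 3/4")
    case False
    have "3 / (32 * real N) = 3 / (16 * real N) / 2" by simp
    then show ?thesis using far[OF j] False reward_bounds(3)[OF N \<delta>] G by linarith
  qed (use near S in linarith)
  ultimately show ?thesis by simp
qed

lemma tilt_quadratic_bounds:
  fixes x y \<delta> :: real
  assumes "0 \<le> x" "x \<le> y" "y \<le> 1"
  shows "0 \<le> y\<^sup>2 - 4 * x * y + x\<^sup>2 + 2 * x"
    and "\<delta> \<le> x \<Longrightarrow> x \<le> 3/4 \<Longrightarrow> \<delta> \<le> 1/8 \<Longrightarrow> \<delta> / 2 \<le> y\<^sup>2 - 4 * x * y + x\<^sup>2 + 2 * x"
proof -
  have small: "x / 2 \<le> y\<^sup>2 - 4 * x * y + x\<^sup>2 + 2 * x" if "x \<le> 1/2"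
  proof -
    have "0 \<le> 3 * x * (1/2 - x)" using that assms by simp
    then have "x / 2 \<le> x * (2 - 3 * x)" by (simp add: algebra_simps)
    moreover have "y\<^sup>2 - 4 * x * y + x\<^sup>2 + 2 * x = (y - 2 * x)\<^sup>2 + x * (2 - 3 * x)"
      by (simp add: power2_eq_square algebra_simps)
    ultimately show ?thesis using zero_le_power2[of "y - 2 * x"] by linarith
  qed
  have large: "(1 - x)\<^sup>2 \<le> y\<^sup>2 - 4 * x * y + x\<^sup>2 + 2 * x" if "1/2 \<le> x"
  proof -
    have "0 \<le> (1 - y) * (4 * x - 1 - y)" using that assms by (intro mult_nonneg_nonneg) auto
    moreover have "y\<^sup>2 - 4 * x * y + x\<^sup>2 + 2 * x = (1 - x)\<^sup>2 + (1 - y) * (4 * x - 1 - y)"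
      by (simp add: power2_eq_square algebra_simps)
    ultimately show ?thesis by simp
  qed
  show "0 \<le> y\<^sup>2 - 4 * x * y + x\<^sup>2 + 2 * x"
  proof (cases "x \<le> 1/2")
    case True
    then show ?thesis using small assms by linarith
  next
    case False
    then show ?thesis using large zero_le_power2[of "1 - x"] by linarith
  qed
  assume "\<delta> \<le> x" "x \<le> 3/4" "\<delta> \<le> 1/8"
  moreover have "(1/4) \<^sup>2 \<le> (1 - x)\<^sup>2" if "x \<le> 3/4" using that by (intro power_mono) auto
  ultimately show "\<delta> / 2 \<le> y\<^sup>2 - 4 * x * y + x\<^sup>2 + 2 * x"
    using small large by (cases "x \<le> 1/2") (auto simp: power2_eq_square)
qed

lemma square_gap_ge:
  fixes w e E d :: real
  assumes w: "0 \<le> w" "w \<le> 1 - d" and e: "0 \<le> e" "e \<le> w * E" and E: "0 \<le> E" "6 * E \<le> d"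
  shows "w * d / 2 \<le> w - (w + e)\<^sup>2"
proof -
  have "(w + e)\<^sup>2 \<le> (w * (1 + E))\<^sup>2" using w e by (intro power_mono) (auto simp: algebra_simps)
  also have "\<dots> = w * (w * (1 + E)\<^sup>2)" by (simp add: power2_eq_square)
  also have "\<dots> \<le> w * (1 - d / 2)"
  proof (intro mult_left_mono)
    have "E * E \<le> E * 1" using w E by (intro mult_left_mono) auto
    then have "(1 + E)\<^sup>2 \<le> 1 + 3 * E" by (simp add: power2_eq_square algebra_simps)
    then have "w * (1 + E)\<^sup>2 \<le> (1 - d) * (1 + 3 * E)" using w E by (intro mult_mono) auto
    also have "\<dots> = 1 - d + 3 * E - 3 * (d * E)" by (simp add: algebra_simps)
    also have "\<dots> \<le> 1 - d / 2" using E mult_nonneg_nonneg[of d E] by linarith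
    finally show "w * (1 + E)\<^sup>2 \<le> 1 - d / 2" .
  qed (use w in simp)
  finally show ?thesis by (simp add: algebra_simps)
qed

lemma tie_alloc_gain:
  assumes N: "N \<ge> 3" and \<delta>: "0 < \<delta>" "\<delta> \<le> M" "M \<le> 1"
  shows "beta_exp N * \<delta> powr (1 + beta_exp N) * (1 - M) / 2
      \<le> M * (top_alloc N \<delta> M * (2 - top_alloc N \<delta> M) - M powr beta_exp N)"
proof -
  let ?p = "beta_exp N" let ?w = "1 - M powr ?p" and ?e = "pert N \<delta> / 2 * (1 - M)"
  have p: "0 < ?p" "?p \<le> 1" using beta_exp_bounds[OF N] by auto
  have w: "?p * (1 - M) \<le> ?w" using powr_le_affine[of M ?p] \<delta> p by simp
  have "\<delta> powr ?p \<le> M powr ?p" using \<delta> p by (intro powr_mono2) auto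
  then have w1: "?w \<le> 1 - \<delta> powr ?p" by simp
  have w0: "0 \<le> ?w" using powr_le1[of ?p M] p \<delta> by simp
  have e0: "0 \<le> ?e" using pert_pos[OF N \<delta>(1)] \<delta> by simp
  have "6 * \<delta> powr ?p \<le> (8 * real N) * \<delta> powr ?p" using N by (intro mult_right_mono) auto
  then have E: "6 * (\<delta> powr ?p / (8 * real N)) \<le> \<delta> powr ?p" using N by (simp add: field_simps)
  have e: "?e \<le> ?w * (\<delta> powr ?p / (8 * real N))"
  proof -
    have c: "pert N \<delta> / 2 * (real N - 1) = \<delta> powr ?p / (8 * real N)"
      using N by (simp add: pert_def field_simps)
    have "(real N - 1) * ?p = 1" using N by (simp add: beta_exp_def)
    then have "?e = pert N \<delta> / 2 * ((real N - 1) * ?p) * (1 - M)" by simp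
    also have "\<dots> = pert N \<delta> / 2 * (real N - 1) * (?p * (1 - M))" by (simp only: mult.assoc)
    also have "\<dots> \<le> pert N \<delta> / 2 * (real N - 1) * ?w"
      using w pert_pos[OF N \<delta>(1)] N by (intro mult_left_mono) auto
    also have "\<dots> = ?w * (\<delta> powr ?p / (8 * real N))" unfolding c by simp
    finally show ?thesis .
  qed
  have gap: "?w * \<delta> powr ?p / 2 \<le> ?w - (?w + ?e)\<^sup>2"
    by (rule square_gap_ge[OF w0 w1 e0 e _ E]) simp
  have "?p * \<delta> powr (1 + ?p) * (1 - M) / 2 = \<delta> * (?p * (1 - M) * (\<delta> powr ?p / 2))"
    using powr_one_plus[of \<delta> ?p] \<delta> by simp
  also have "\<dots> \<le> M * (?w * \<delta> powr ?p / 2)"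
    using w \<delta> p by (intro mult_mono) auto
  also have "\<dots> \<le> M * (?w - (?w + ?e)\<^sup>2)" using gap \<delta> by (intro mult_left_mono) auto
  also have "?w - (?w + ?e)\<^sup>2 = top_alloc N \<delta> M * (2 - top_alloc N \<delta> M) - M powr ?p"
    by (simp add: top_alloc_def tilted_pow_def power2_eq_square field_simps)
  finally show ?thesis .
qed

locale bid_profile =
  fixes N :: nat and \<delta> :: real and v :: "nat \<Rightarrow> real"
  assumes N: "N \<ge> 3" and \<delta>: "0 < \<delta>" "\<delta> \<le> 1/8" and v: "v \<in> profiles N"
begin

lemma \<delta>_le_one: "\<delta> \<le> 1"
  using \<delta> by simp

lemma value_bounds: "k < N \<Longrightarrow> 0 \<le> v k \<and> v k \<le> 1"
  using profiles_range[OF v] .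

lemma perturbed_t_nonneg: "0 \<le> perturbed_t N \<delta> v k"
  using perturbed_t_bounds[OF N \<delta>(1) \<delta>_le_one v] by simp

lemma spa_share_plus_gain_le: "spa_share N (v k) + gain N \<delta> (v k) \<le> spa_share N (v k) + reward N \<delta>"
  using gain_le_reward[OF N \<delta>(1) \<delta>_le_one] by simp

lemma spa_share_plus_gain_nonpos_below: "k < N \<Longrightarrow> v k \<le> \<delta> \<Longrightarrow> spa_share N (v k) + gain N \<delta> (v k) \<le> 0"
  using spa_share_plus_gain_nonpos[OF N] value_bounds by simp

end

locale unique_top = bid_profile +
  fixes i j :: nat
  assumes top: "i < N" "v i = top_val N v"
    and unique: "\<And>k. k < N \<Longrightarrow> k \<noteq> i \<Longrightarrow> v k < top_val N v"
    and runner_up: "j < N" "j \<noteq> i" "v j = second_val N v i"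
begin

text \<open>How far the losers' shares fall short of the runner-up's: half of it pays for the consolation
  allocations and the tilt, the other half for the rewards.\<close>
definition slack :: real where
  "slack = (\<Sum>k\<in>{..<N} - {i}. spa_share N (v j) - spa_share N (v k))"

lemma second_val_others: "k < N \<Longrightarrow> k \<noteq> i \<Longrightarrow> second_val N v k = top_val N v"
  using second_val_unique_top(1)[OF _ top unique] N by simp

lemma third_val_runner_up: "third_val N v j = third_val N v i"
proof -
  have "v i = second_val N v j" using second_val_others[OF runner_up(1,2)] top by simp
  then have "third_val N v j = Max (v ` ({..<N} - {j, i}))"
    by (rule third_val_eq[OF N top(1) runner_up(2)[symmetric]])
  also have "\<dots> = third_val N v i"
    using third_val_eq[OF N runner_up] by (simp add: insert_commute)
  finally show ?thesis .
qed

lemma pay_others: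
  assumes "k < N" "k \<noteq> i"
  shows "perturbed_t N \<delta> v k = (if \<delta> \<le> third_val N v k \<and> third_val N v k \<le> v k
           then third_val N v k * (pert N \<delta> * (1 - top_val N v)) else 0)"
  using pay_below[OF _ \<delta>(1)] unique[OF assms] second_val_others[OF assms] perturbed_t_eq_pay assms
  by simp

lemma sum_pay_ge: "perturbed_t N \<delta> v i + perturbed_t N \<delta> v j \<le> (\<Sum>k<N. perturbed_t N \<delta> v k)"
proof -
  have "(\<Sum>k<N. perturbed_t N \<delta> v k) = perturbed_t N \<delta> v i + perturbed_t N \<delta> v j
      + (\<Sum>k\<in>{..<N} - {i} - {j}. perturbed_t N \<delta> v k)"
    using top runner_up by (simp add: sum.remove)
  moreover have "0 \<le> (\<Sum>k\<in>{..<N} - {i} - {j}. perturbed_t N \<delta> v k)"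
    using perturbed_t_nonneg by (intro sum_nonneg) auto
  ultimately show ?thesis by simp
qed

lemma slack_ge: "k < N \<Longrightarrow> k \<noteq> i \<Longrightarrow> spa_share N (v j) - spa_share N (v k) \<le> slack"
  unfolding slack_def
  using second_val_ge[of _ N i v] runner_up value_bounds spa_share_mono[OF N]
  by (intro member_le_sum) auto

lemma slack_nonneg: "0 \<le> slack"
  using slack_ge[OF runner_up(1,2)] by simp

lemma sum_spa_share:
  "(\<Sum>k<N. spa_share N (v k)) = spa_share N (top_val N v) + (real N - 1) * spa_share N (v j) - slack"
proof -
  have "(\<Sum>k\<in>{..<N} - {i}. spa_share N (v k)) = (real N - 1) * spa_share N (v j) - slack"
    using top by (simp add: slack_def sum_subtractf of_nat_diff)
  then show ?thesis using top by (simp add: sum.remove)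
qed


lemma runner_up_bounds:
  "0 \<le> third_val N v i" "third_val N v i \<le> v j" "v j < top_val N v" "top_val N v \<le> 1"
  using third_val_range[OF v N top(1)] third_val_le_second_val[OF N top(1), of v] runner_up
    unique[OF runner_up(1,2)] value_bounds[OF top(1)] top by auto

lemma top_pair_pay_active:
  assumes act: "\<delta> \<le> third_val N v i"
  shows "(\<Sum>k<N. spa_share N (v k)) + slack / 2
      + pert N \<delta> / 4 * ((top_val N v)\<^sup>2 - 4 * v j * top_val N v + (v j)\<^sup>2 + 2 * v j)
    \<le> perturbed_t N \<delta> v i + perturbed_t N \<delta> v j"
proof -
  let ?M = "top_val N v" and ?x = "v j" and ?s = "third_val N v i" and ?c = "pert N \<delta>"
  note b = runner_up_bounds
  have ti: "perturbed_t N \<delta> v i = spa_share N ?M + (real N - 1) * spa_share N ?x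
      + ?c / 4 * ((1 - ?x)\<^sup>2 - (1 - ?M\<^sup>2)) - (?x - ?s) * (?c * (1 - ?x))"
    using pay_above_active[OF N, of ?x ?M \<delta> ?s] perturbed_t_eq_pay[OF top(1)] top runner_up b act by simp
  have tj: "perturbed_t N \<delta> v j = ?s * (?c * (1 - ?M))"
    using pay_others[OF runner_up(1,2)] third_val_runner_up act b by simp
  obtain k where k: "k < N" "k \<noteq> i" "v k = ?s" using third_val_attained[OF N runner_up] by blast
  have "4 * (?c * (?x - ?s)) \<le> slack"
    using rent_le_spa_share_gap[OF N \<delta>(1), of ?x ?s] slack_ge[OF k(1,2)] k act b by simp
  moreover have "?c * (?x - ?s) * (1 - ?x) \<le> ?c * (?x - ?s)" "?c * (?x - ?s) * (1 - ?M) \<le> ?c * (?x - ?s)"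
    using pert_pos[OF N \<delta>(1)] b value_bounds[OF runner_up(1)] by (auto intro!: mult_left_le)
  moreover have "perturbed_t N \<delta> v i + perturbed_t N \<delta> v j = spa_share N ?M + (real N - 1) * spa_share N ?x
      + ?c / 4 * (?M\<^sup>2 - 4 * ?x * ?M + ?x\<^sup>2 + 2 * ?x) - ?c * (?x - ?s) * (1 - ?x) - ?c * (?x - ?s) * (1 - ?M)"
    unfolding ti tj by (simp add: power2_eq_square algebra_simps)
  ultimately show ?thesis using sum_spa_share by linarith
qed

lemma pointwise_bound_active:
  assumes act: "\<delta> \<le> third_val N v i"
  shows "(\<Sum>k<N. spa_share N (v k) + gain N \<delta> (v k)) \<le> (\<Sum>k<N. perturbed_t N \<delta> v k)"
proof -
  let ?M = "top_val N v" and ?x = "v j"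
  let ?f = "pert N \<delta> / 4 * (?M\<^sup>2 - 4 * ?x * ?M + ?x\<^sup>2 + 2 * ?x)"
  note b = runner_up_bounds
  have "(\<Sum>k<N. gain N \<delta> (v k)) \<le> slack / 2 + ?f"
  proof (rule sum_gain_le[OF N \<delta>(1) \<delta>_le_one slack_nonneg, where y = ?x])
    show "0 \<le> ?f"
      using tilt_quadratic_bounds(1)[of ?x ?M] pert_pos[OF N \<delta>(1)] b by simp
    assume "?x \<le> 3/4"
    then have "pert N \<delta> / 4 * (\<delta> / 2) \<le> ?f"
      using tilt_quadratic_bounds(2)[of ?x ?M \<delta>] pert_pos[OF N \<delta>(1)] b act \<delta>
      by (intro mult_left_mono) auto
    moreover have "pert N \<delta> / 4 * (\<delta> / 2) = real N * reward N \<delta>"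
      using reward_bounds(2)[OF N \<delta>(1) \<delta>_le_one] by simp
    ultimately show "real N * reward N \<delta> \<le> ?f" by linarith
  next
    fix k assume k: "k < N" "v k \<le> 1/2" "3/4 < ?x"
    then have "k \<noteq> i" using b top by auto
    then show "3 / (16 * real N) \<le> slack"
      using spa_share_far_gap[OF N, of "v k" ?x] slack_ge[of k] value_bounds k runner_up by force
  qed
  then show ?thesis
    using top_pair_pay_active[OF act] sum_pay_ge by (simp add: sum.distrib)
qed

lemma pointwise_bound_inactive:
  assumes nact: "\<not> \<delta> \<le> third_val N v i"
  shows "(\<Sum>k<N. spa_share N (v k) + gain N \<delta> (v k)) \<le> (\<Sum>k<N. perturbed_t N \<delta> v k)"
proof -
  let ?M = "top_val N v" and ?x = "v j" and ?F = "\<lambda>k. spa_share N (v k) + gain N \<delta> (v k)"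
  note b = runner_up_bounds
  have "(\<Sum>k\<in>{..<N} - {i} - {j}. ?F k) \<le> 0"
    using third_val_ge[OF N runner_up] nact by (intro sum_nonpos spa_share_plus_gain_nonpos_below) force+
  then have split: "(\<Sum>k<N. ?F k) \<le> ?F i + ?F j"
    using top runner_up by (simp add: sum.remove)
  have ti: "perturbed_t N \<delta> v i = (if ?M < \<delta> then 0
      else spa_share N ?M + (real N - 1) * spa_share N (max ?x \<delta>))"
    using pay_above_spa[OF N, of ?x ?M \<delta>] perturbed_t_eq_pay[OF top(1)] top runner_up b nact by simp
  have "perturbed_t N \<delta> v i \<le> (\<Sum>k<N. perturbed_t N \<delta> v k)"
    using sum_pay_ge perturbed_t_nonneg[of j] by linarith
  moreover have "?F i + ?F j \<le> perturbed_t N \<delta> v i"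
  proof -
    note R = reward_bounds(1,5)[OF N \<delta>(1) \<delta>_le_one] and share = spa_share_nonneg[of N \<delta>]
    consider "?M < \<delta>" | "\<delta> \<le> ?M" "?x < \<delta>" | "\<delta> \<le> ?x" by linarith
    then show ?thesis
    proof cases
      case 1
      then show ?thesis
        using spa_share_plus_gain_nonpos_below[OF top(1)] spa_share_plus_gain_nonpos_below[OF runner_up(1)] b top ti
        by simp
    next
      case 2
      then show ?thesis
        using spa_share_plus_gain_le[of i] spa_share_plus_gain_nonpos[OF N, of ?x \<delta>] b top ti R share
        by (simp add: algebra_simps)
    next
      case 3
      have "spa_share N \<delta> \<le> spa_share N ?x" using spa_share_mono[OF N] 3 \<delta> by simp
      then have "(real N - 2) * spa_share N \<delta> \<le> (real N - 2) * spa_share N ?x"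
        using N by (intro mult_left_mono) auto
      then have "2 * reward N \<delta> \<le> (real N - 2) * spa_share N ?x" using R by linarith
      then show ?thesis
        using spa_share_plus_gain_le[of i] spa_share_plus_gain_le[of j] b top ti 3 by (simp add: algebra_simps)
    qed
  qed
  ultimately show ?thesis using split by linarith
qed

lemma pointwise_bound: "(\<Sum>k<N. spa_share N (v k) + gain N \<delta> (v k)) \<le> (\<Sum>k<N. perturbed_t N \<delta> v k)"
  using pointwise_bound_active pointwise_bound_inactive by blast

end


locale tied_top = bid_profile +
  fixes i i' :: nat
  assumes ties: "i < N" "i' < N" "i \<noteq> i'" "v i = top_val N v" "v i' = top_val N v"
begin

definition tops :: "nat set" where
  "tops = {k\<in>{..<N}. v k = top_val N v}"

definition slack :: real where
  "slack = (\<Sum>k\<in>{..<N} - tops. spa_share N (top_val N v) - spa_share N (v k))"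

lemma tops: "finite tops" "tops \<subseteq> {..<N}" "i \<in> tops" "i' \<in> tops"
  using ties by (auto simp: tops_def)

lemma second_val_eq: "k < N \<Longrightarrow> second_val N v k = top_val N v"
  using second_val_tie[OF _ ties] N by simp

lemma third_val_top: "k \<in> tops \<Longrightarrow> third_val N v k = third_val N v i"
proof (cases "k = i")
  case False
  assume "k \<in> tops"
  then have k: "k < N" "v k = second_val N v i" using second_val_eq ties by (auto simp: tops_def)
  have "v i = second_val N v k" using second_val_eq[of k] k ties by simp
  then have "third_val N v k = Max (v ` ({..<N} - {k, i}))"
    using third_val_eq[OF N ties(1)] False k by simp
  also have "\<dots> = third_val N v i"
    using third_val_eq[OF N k(1) _ k(2)] False by (simp add: insert_commute)
  finally show ?thesis .
qed simp

lemma third_val_bounds: "0 \<le> third_val N v i" "third_val N v i \<le> top_val N v" "top_val N v \<le> 1"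
  using third_val_range[OF v N ties(1)] third_val_le_second_val[OF N ties(1), of v]
    second_val_eq[OF ties(1)] value_bounds[OF ties(1)] ties by auto

lemma le_third_val: "k < N \<Longrightarrow> k \<noteq> i \<Longrightarrow> k \<noteq> i' \<Longrightarrow> v k \<le> third_val N v i"
  using third_val_ge[OF N ties(2) ties(3)[symmetric]] second_val_eq ties by auto

lemma tops_eq_pair: "third_val N v i < top_val N v \<Longrightarrow> tops = {i, i'}"
  using le_third_val tops by (force simp: tops_def)

lemma pay_outside:
  assumes k: "k < N" "k \<notin> tops"
  shows "perturbed_t N \<delta> v k = 0"
proof -
  have "v k < top_val N v" "k \<noteq> i" "k \<noteq> i'"
    using k top_val_ge[of k N v] tops by (auto simp: tops_def)
  moreover have "third_val N v k = top_val N v"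
    using third_val_tie[OF N ties k(1)] calculation by simp
  ultimately show ?thesis
    using pay_below[OF _ \<delta>(1)] perturbed_t_eq_pay[OF k(1)] second_val_eq[OF k(1)] by simp
qed

lemma sum_pay:
  "(\<Sum>k<N. perturbed_t N \<delta> v k) = card tops *
     pay N \<delta> (top_val N v) (third_val N v i) (card tops) (top_val N v)"
proof -
  have "(\<Sum>k<N. perturbed_t N \<delta> v k) = (\<Sum>k\<in>tops. perturbed_t N \<delta> v k)"
    using pay_outside tops by (intro sum.mono_neutral_right) auto
  also have "\<dots> = (\<Sum>k\<in>tops. pay N \<delta> (top_val N v) (third_val N v i) (card tops) (top_val N v))"
  proof (intro sum.cong refl)
    fix k assume k: "k \<in> tops"
    then have "k < N" "v k = top_val N v" by (auto simp: tops_def)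
    then show "perturbed_t N \<delta> v k = pay N \<delta> (top_val N v) (third_val N v i) (card tops) (top_val N v)"
      using perturbed_t_eq_pay second_val_eq third_val_top[OF k] tie_count_top
      by (simp add: tops_def)
  qed
  finally show ?thesis by simp
qed

lemma slack_ge: "k < N \<Longrightarrow> k \<notin> tops \<Longrightarrow> spa_share N (top_val N v) - spa_share N (v k) \<le> slack"
  unfolding slack_def using top_val_ge[of _ N v] value_bounds spa_share_mono[OF N]
  by (intro member_le_sum) auto

lemma slack_nonneg: "0 \<le> slack"
  unfolding slack_def using top_val_ge[of _ N v] value_bounds spa_share_mono[OF N]
  by (intro sum_nonneg) auto

lemma sum_spa_share: "(\<Sum>k<N. spa_share N (v k)) = real N * spa_share N (top_val N v) - slack"
proof -
  have "(\<Sum>k<N. spa_share N (v k)) = (\<Sum>k\<in>{..<N} - tops. spa_share N (v k)) + (\<Sum>k\<in>tops. spa_share N (v k))"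
    using tops by (simp add: sum.subset_diff)
  also have "(\<Sum>k\<in>tops. spa_share N (v k)) = (\<Sum>k\<in>tops. spa_share N (top_val N v))"
    by (intro sum.cong) (auto simp: tops_def)
  also have "(\<Sum>k\<in>{..<N} - tops. spa_share N (v k))
      = (\<Sum>k\<in>{..<N} - tops. spa_share N (top_val N v)) - slack"
    by (simp add: slack_def sum_subtractf)
  finally show ?thesis
    using sum.subset_diff[OF tops(2) finite_lessThan, of "\<lambda>_. spa_share N (top_val N v)"] by simp
qed

lemma two_le_card_tops: "2 \<le> card tops"
proof -
  have "card {i, i'} \<le> card tops" using tops by (intro card_mono) auto
  then show ?thesis using ties by simp
qed

lemma tie_rent_le:
  assumes act: "\<delta> \<le> third_val N v i"
  shows "card tops * ((top_val N v - third_val N v i) * (pert N \<delta> * (1 - top_val N v))) \<le> slack / 2"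
proof (cases "third_val N v i < top_val N v")
  case True
  let ?M = "top_val N v" and ?s = "third_val N v i" and ?c = "pert N \<delta>"
  have "v i' = second_val N v i" using second_val_eq ties by simp
  then obtain k where k: "k < N" "k \<noteq> i" "k \<noteq> i'" "v k = ?s"
    using third_val_attained[OF N ties(2) ties(3)[symmetric]] by blast
  then have "k \<notin> tops" using True by (simp add: tops_def)
  then have "4 * (?c * (?M - ?s)) \<le> slack"
    using rent_le_spa_share_gap[OF N \<delta>(1) _ third_val_bounds(1,2)] slack_ge[OF k(1)] k act
      third_val_bounds by force
  moreover have "(?M - ?s) * (?c * (1 - ?M)) \<le> ?c * (?M - ?s)"
    using pert_pos[OF N \<delta>(1)] third_val_bounds True by (simp add: mult_left_le)
  ultimately show ?thesis using tops_eq_pair[OF True] ties by simp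
qed (use third_val_bounds slack_nonneg in simp)

lemma sum_pay_active:
  assumes act: "\<delta> \<le> third_val N v i"
  shows "(\<Sum>k<N. spa_share N (v k)) + slack / 2
      + beta_exp N * \<delta> powr (1 + beta_exp N) * (1 - top_val N v) / 2 \<le> (\<Sum>k<N. perturbed_t N \<delta> v k)"
proof -
  let ?M = "top_val N v" and ?s = "third_val N v i" and ?T = "top_alloc N \<delta> (top_val N v)"
  have K: "0 < card tops" using two_le_card_tops by simp
  have "(\<Sum>k<N. perturbed_t N \<delta> v k)
      = card tops * (?M * (?T * (2 - ?T) / card tops) - (?M - ?s) * (pert N \<delta> * (1 - ?M)))"
    using sum_pay pay_tie[OF \<delta>(1) third_val_bounds(2), of N "card tops"] act by simp
  also have "\<dots> = ?M * (?T * (2 - ?T) - ?M powr beta_exp N) + ?M * ?M powr beta_exp N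
        - card tops * ((?M - ?s) * (pert N \<delta> * (1 - ?M)))"
    using K by (simp add: field_simps)
  finally have "(\<Sum>k<N. perturbed_t N \<delta> v k)
      = ?M * (?T * (2 - ?T) - ?M powr beta_exp N) + ?M * ?M powr beta_exp N
        - card tops * ((?M - ?s) * (pert N \<delta> * (1 - ?M)))" .
  moreover have "?M * ?M powr beta_exp N = real N * spa_share N ?M"
    using mult_powr_beta_exp third_val_bounds N by simp
  moreover have "beta_exp N * \<delta> powr (1 + beta_exp N) * (1 - ?M) / 2
      \<le> ?M * (?T * (2 - ?T) - ?M powr beta_exp N)"
    using tie_alloc_gain[OF N \<delta>(1)] act third_val_bounds by simp
  ultimately show ?thesis using sum_spa_share tie_rent_le[OF act] by linarith
qed

lemma pointwise_bound_active:
  assumes act: "\<delta> \<le> third_val N v i"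
  shows "(\<Sum>k<N. spa_share N (v k) + gain N \<delta> (v k)) \<le> (\<Sum>k<N. perturbed_t N \<delta> v k)"
proof -
  let ?M = "top_val N v" and ?G = "beta_exp N * \<delta> powr (1 + beta_exp N) * (1 - top_val N v) / 2"
  have p: "0 < beta_exp N" using beta_exp_bounds[OF N] by simp
  have "(\<Sum>k<N. gain N \<delta> (v k)) \<le> slack / 2 + ?G"
  proof (rule sum_gain_le[OF N \<delta>(1) \<delta>_le_one slack_nonneg, where y = ?M])
    show "0 \<le> ?G" using p third_val_bounds by simp
    assume "?M \<le> 3/4"
    then have "beta_exp N * \<delta> powr (1 + beta_exp N) * (1/4) \<le> beta_exp N * \<delta> powr (1 + beta_exp N) * (1 - ?M)"
      using p by (intro mult_left_mono) auto
    then show "real N * reward N \<delta> \<le> ?G" using reward_bounds(4)[OF N \<delta>(1) \<delta>_le_one] by simp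
  next
    fix k assume k: "k < N" "v k \<le> 1/2" "3/4 < ?M"
    then have "k \<notin> tops" by (auto simp: tops_def)
    then show "3 / (16 * real N) \<le> slack"
      using spa_share_far_gap[OF N, of "v k" ?M] slack_ge[OF k(1)] value_bounds[OF k(1)] third_val_bounds k
      by force
  qed
  then show ?thesis using sum_pay_active[OF act] by (simp add: sum.distrib)
qed

lemma pointwise_bound_inactive:
  assumes nact: "\<not> \<delta> \<le> third_val N v i"
  shows "(\<Sum>k<N. spa_share N (v k) + gain N \<delta> (v k)) \<le> (\<Sum>k<N. perturbed_t N \<delta> v k)"
proof (cases "\<delta> \<le> top_val N v")
  case True
  let ?M = "top_val N v" and ?F = "\<lambda>k. spa_share N (v k) + gain N \<delta> (v k)"
  have "third_val N v i < ?M" using nact True by simp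
  then have pair: "tops = {i, i'}" by (rule tops_eq_pair)
  have "(\<Sum>k\<in>{..<N} - {i} - {i'}. ?F k) \<le> 0"
    using le_third_val nact by (intro sum_nonpos spa_share_plus_gain_nonpos_below) force+
  moreover have "(\<Sum>k<N. ?F k) = ?F i + ?F i' + (\<Sum>k\<in>{..<N} - {i} - {i'}. ?F k)"
    using ties sum.remove[of "{..<N}" i ?F] sum.remove[of "{..<N} - {i}" i' ?F] by simp
  ultimately have "(\<Sum>k<N. ?F k) \<le> 2 * spa_share N ?M + 2 * reward N \<delta>"
    using spa_share_plus_gain_le[of i] spa_share_plus_gain_le[of i'] ties by simp
  also have "\<dots> \<le> real N * spa_share N ?M"
  proof -
    have "(real N - 2) * spa_share N \<delta> \<le> (real N - 2) * spa_share N ?M"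
      using spa_share_mono[OF N] True \<delta> N by (intro mult_left_mono) auto
    then show ?thesis using reward_bounds(5)[OF N \<delta>(1) \<delta>_le_one] by (simp add: algebra_simps)
  qed
  also have "\<dots> = (\<Sum>k<N. perturbed_t N \<delta> v k)"
    using sum_pay pay_tie[OF \<delta>(1) third_val_bounds(2)] pair ties nact True
      mult_powr_beta_exp[of N ?M] third_val_bounds N by simp
  finally show ?thesis .
next
  case False
  then have "(\<Sum>k<N. spa_share N (v k) + gain N \<delta> (v k)) \<le> 0"
    using top_val_ge[of _ N v] by (intro sum_nonpos spa_share_plus_gain_nonpos_below) force+
  also have "0 = (\<Sum>k<N. perturbed_t N \<delta> v k)"
    using sum_pay pay_tie[OF \<delta>(1) third_val_bounds(2)] nact False by simp
  finally show ?thesis .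
qed

lemma pointwise_bound: "(\<Sum>k<N. spa_share N (v k) + gain N \<delta> (v k)) \<le> (\<Sum>k<N. perturbed_t N \<delta> v k)"
  using pointwise_bound_active pointwise_bound_inactive by blast

end

lemma (in bid_profile) revenue_pointwise:
  "(\<Sum>k<N. spa_share N (v k) + gain N \<delta> (v k)) \<le> (\<Sum>k<N. perturbed_t N \<delta> v k)"
proof -
  obtain i where i: "i < N" "v i = top_val N v" using top_val_attained[of N v] N by auto
  show ?thesis
  proof (cases "\<forall>k<N. k \<noteq> i \<longrightarrow> v k < top_val N v")
    case True
    obtain j where "j < N" "j \<noteq> i" "v j = second_val N v i"
      using second_val_attained[of N i v] N by auto
    then interpret unique_top N \<delta> v i j
      using True i by unfold_locales auto
    show ?thesis by (rule pointwise_bound)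
  next
    case False
    then obtain i' where "i' < N" "i' \<noteq> i" "v i' = top_val N v"
      using top_val_ge[of _ N v] by force
    then interpret tied_top N \<delta> v i i'
      using i by unfold_locales auto
    show ?thesis by (rule pointwise_bound)
  qed
qed

section \<open>Expected revenue\<close>

lemma unit_cdf_props:
  assumes F: "cdf_on_unit_with_full_support F"
  shows "mono F" "\<And>a. continuous (at_right a) F" "(F \<longlongrightarrow> 0) at_bot" "(F \<longlongrightarrow> 1) at_top"
    "\<And>x. x < 0 \<Longrightarrow> F x = 0" "\<And>x. 1 \<le> x \<Longrightarrow> F x = 1"
    "\<And>x e. x \<in> {0..1} \<Longrightarrow> 0 < e \<Longrightarrow> F (x - e) < F (x + e)"
proof -
  show zero: "\<And>x. x < 0 \<Longrightarrow> F x = 0" and one: "\<And>x. 1 \<le> x \<Longrightarrow> F x = 1"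
    using F by (auto simp: cdf_on_unit_with_full_support_def)
  show "mono F" "\<And>a. continuous (at_right a) F"
    "\<And>x e. x \<in> {0..1} \<Longrightarrow> 0 < e \<Longrightarrow> F (x - e) < F (x + e)"
    using F by (auto simp: cdf_on_unit_with_full_support_def)
  have "eventually (\<lambda>x. F x = 0) at_bot"
    unfolding eventually_at_bot_linorder by (rule exI[of _ "-1"]) (auto intro: zero)
  then show "(F \<longlongrightarrow> 0) at_bot" by (rule tendsto_eventually)
  have "eventually (\<lambda>x. F x = 1) at_top"
    unfolding eventually_at_top_linorder by (rule exI[of _ 1]) (auto intro: one)
  then show "(F \<longlongrightarrow> 1) at_top" by (rule tendsto_eventually)
qed

lemma unit_cdf_interval_measure:
  assumes F: "cdf_on_unit_with_full_support F"
  shows "real_distribution (interval_measure F)" "cdf (interval_measure F) = F"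
  using unit_cdf_props(1-4)[OF F]
  by (auto intro!: real_distribution_interval_measure cdf_interval_measure simp: mono_def)

lemma Pi_F_facts:
  assumes "\<pi> \<in> Pi_F N F"
  shows "prob_space \<pi>" "sets \<pi> = sets (profile_space N)" "space \<pi> = space (profile_space N)"
    "\<And>i x. i < N \<Longrightarrow> measure \<pi> {v \<in> space \<pi>. v i \<le> x} = F x"
  using assms sets_eq_imp_space_eq[of \<pi> "profile_space N"] by (auto simp: Pi_F_def)

lemma Pi_F_measurable:
  assumes "\<pi> \<in> Pi_F N F" "f \<in> borel_measurable (profile_space N)"
  shows "f \<in> borel_measurable \<pi>"
  using assms(2) measurable_cong_sets[OF Pi_F_facts(2)[OF assms(1)] refl] by blast

lemma Pi_F_marginal:
  assumes F: "cdf_on_unit_with_full_support F" and \<pi>: "\<pi> \<in> Pi_F N F" and i: "i < N"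
  shows "distr \<pi> borel (\<lambda>v. v i) = interval_measure F"
proof (rule cdf_unique)
  interpret prob_space \<pi> using Pi_F_facts(1)[OF \<pi>] .
  have meas: "(\<lambda>v. v i) \<in> borel_measurable \<pi>" using Pi_F_measurable[OF \<pi> measurable_coordinate[OF i]] .
  show "real_distribution (distr \<pi> borel (\<lambda>v. v i))" using meas by simp
  show "real_distribution (interval_measure F)" using unit_cdf_interval_measure(1)[OF F] .
  show "cdf (distr \<pi> borel (\<lambda>v. v i)) = cdf (interval_measure F)"
  proof
    fix x
    have "(\<lambda>v. v i) -` {..x} \<inter> space \<pi> = {v \<in> space \<pi>. v i \<le> x}" by auto
    then have "cdf (distr \<pi> borel (\<lambda>v. v i)) x = F x"
      using meas Pi_F_facts(4)[OF \<pi> i] unfolding cdf_def by (simp add: measure_distr)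
    then show "cdf (distr \<pi> borel (\<lambda>v. v i)) x = cdf (interval_measure F) x"
      using unit_cdf_interval_measure(2)[OF F] by simp
  qed
qed

lemma (in prob_space) AE_nonneg_if_cdf_zero:
  fixes X :: "'a \<Rightarrow> real"
  assumes X: "X \<in> borel_measurable M" and zero: "\<And>x. x < 0 \<Longrightarrow> prob {\<omega> \<in> space M. X \<omega> \<le> x} = 0"
  shows "AE \<omega> in M. 0 \<le> X \<omega>"
proof -
  let ?B = "\<lambda>n::nat. {\<omega> \<in> space M. X \<omega> \<le> - 1 / real (Suc n)}"
  have B: "range ?B \<subseteq> events" using X by auto
  have "emeasure M (?B n) = 0" for n
    using zero[of "- 1 / real (Suc n)"] B by (simp add: emeasure_eq_measure)
  then have null: "emeasure M (\<Union>n. ?B n) = 0" by (rule emeasure_UN_eq_0) (use B in auto)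
  have "{\<omega> \<in> space M. \<not> 0 \<le> X \<omega>} \<subseteq> (\<Union>n. ?B n)"
  proof
    fix \<omega> assume \<omega>: "\<omega> \<in> {\<omega> \<in> space M. \<not> 0 \<le> X \<omega>}"
    then obtain n where "inverse (real (Suc n)) < - X \<omega>" using reals_Archimedean[of "- X \<omega>"] by auto
    then show "\<omega> \<in> (\<Union>n. ?B n)" using \<omega> by (auto simp: inverse_eq_divide intro!: exI[of _ n])
  qed
  then show ?thesis by (rule AE_I) (use null B in \<open>auto intro: sets.countable_UN\<close>)
qed

lemma Pi_F_AE_profiles:
  assumes F: "cdf_on_unit_with_full_support F" and \<pi>: "\<pi> \<in> Pi_F N F"
  shows "AE v in \<pi>. v \<in> profiles N"
proof -
  interpret prob_space \<pi> using Pi_F_facts(1)[OF \<pi>] .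
  have "AE v in \<pi>. 0 \<le> v i \<and> v i \<le> 1" if i: "i < N" for i
  proof -
    have meas: "(\<lambda>v. v i) \<in> borel_measurable \<pi>" using Pi_F_measurable[OF \<pi> measurable_coordinate[OF i]] .
    have "prob {v \<in> space \<pi>. v i \<le> 1} = 1"
      using Pi_F_facts(4)[OF \<pi> i, of 1] unit_cdf_props(6)[OF F, of 1] by simp
    from AE_prob_1[OF this] have "AE v in \<pi>. v i \<le> 1" by auto
    moreover have "AE v in \<pi>. 0 \<le> v i"
      using AE_nonneg_if_cdf_zero[OF meas] Pi_F_facts(4)[OF \<pi> i] unit_cdf_props(5)[OF F] by simp
    ultimately show ?thesis by eventually_elim auto
  qed
  then have "AE v in \<pi>. \<forall>i\<in>{..<N}. 0 \<le> v i \<and> v i \<le> 1" by (intro AE_finite_allI) auto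
  then show ?thesis
  proof (rule AE_mp[OF _ AE_I2])
    fix v assume "v \<in> space \<pi>"
    then have "v \<in> PiE {..<N} (\<lambda>_. UNIV)"
      using Pi_F_facts(3)[OF \<pi>] by (simp add: profile_space_def space_PiM)
    then show "(\<forall>i\<in>{..<N}. 0 \<le> v i \<and> v i \<le> 1) \<longrightarrow> v \<in> profiles N"
      by (auto simp: profiles_def PiE_def Pi_def)
  qed
qed

lemma Pi_F_integral_coordinate:
  fixes g :: "real \<Rightarrow> real"
  assumes F: "cdf_on_unit_with_full_support F" and \<pi>: "\<pi> \<in> Pi_F N F" and i: "i < N"
    and g: "g \<in> borel_measurable borel" and bound: "\<And>x. 0 \<le> x \<Longrightarrow> x \<le> 1 \<Longrightarrow> \<bar>g x\<bar> \<le> B"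
  shows "integrable \<pi> (\<lambda>v. g (v i))"
    and "(\<integral>v. g (v i) \<partial>\<pi>) = (\<integral>x. g x \<partial>interval_measure F)"
proof -
  interpret prob_space \<pi> using Pi_F_facts(1)[OF \<pi>] .
  have meas: "(\<lambda>v. v i) \<in> borel_measurable \<pi>" using Pi_F_measurable[OF \<pi> measurable_coordinate[OF i]] .
  have "AE v in \<pi>. norm (g (v i)) \<le> B"
    using Pi_F_AE_profiles[OF F \<pi>] by eventually_elim (use bound profiles_range i in auto)
  then show "integrable \<pi> (\<lambda>v. g (v i))"
    using measurable_compose[OF meas g] by (intro integrable_const_bound) auto
  have "(\<integral>x. g x \<partial>distr \<pi> borel (\<lambda>v. v i)) = (\<integral>v. g (v i) \<partial>\<pi>)"
    by (rule integral_distr[OF meas g])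
  then show "(\<integral>v. g (v i) \<partial>\<pi>) = (\<integral>x. g x \<partial>interval_measure F)"
    using Pi_F_marginal[OF F \<pi> i] by simp
qed

lemma Pi_F_integral_sum:
  fixes g :: "real \<Rightarrow> real"
  assumes F: "cdf_on_unit_with_full_support F" and \<pi>: "\<pi> \<in> Pi_F N F"
    and g: "g \<in> borel_measurable borel" and bound: "\<And>x. 0 \<le> x \<Longrightarrow> x \<le> 1 \<Longrightarrow> \<bar>g x\<bar> \<le> B"
  shows "integrable \<pi> (\<lambda>v. \<Sum>i<N. g (v i))"
    and "(\<integral>v. (\<Sum>i<N. g (v i)) \<partial>\<pi>) = real N * (\<integral>x. g x \<partial>interval_measure F)"
  using Pi_F_integral_coordinate[OF F \<pi> _ g bound] by auto

lemma measurable_spa_share [measurable]: "spa_share N \<in> borel_measurable borel"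
  unfolding spa_share_def by measurable

lemma measurable_gain [measurable]: "gain N \<delta> \<in> borel_measurable borel"
  unfolding gain_def by measurable

lemma abs_gain_le_one:
  assumes N: "N \<ge> 3" and \<delta>: "0 < \<delta>" "\<delta> \<le> 1"
  shows "\<bar>gain N \<delta> x\<bar> \<le> 1"
proof -
  have "reward N \<delta> \<le> real N * reward N \<delta>"
    using reward_bounds(1)[OF N \<delta>] N by (simp add: mult_le_cancel_right1)
  also have "\<dots> \<le> 3 / (32 * real N)" using reward_bounds(3)[OF N \<delta>] .
  also have "\<dots> \<le> 1" using N by simp
  finally show ?thesis
    using reward_bounds(1)[OF N \<delta>] spa_share_le_one[OF N _ \<delta>(2)] spa_share_nonneg[of N \<delta>] \<delta>
    by (auto simp: gain_def)
qed

lemma perturbed_revenue_ge: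
  assumes N: "N \<ge> 3" and \<delta>: "0 < \<delta>" "\<delta> \<le> 1/8"
    and F: "cdf_on_unit_with_full_support F" and \<pi>: "\<pi> \<in> Pi_F N F"
  shows "integrable \<pi> (\<lambda>v. \<Sum>i<N. perturbed_t N \<delta> v i)"
    and "real N * (\<integral>x. spa_share N x + gain N \<delta> x \<partial>interval_measure F) \<le> revenue N (perturbed_t N \<delta>) \<pi>"
proof -
  interpret prob_space \<pi> using Pi_F_facts(1)[OF \<pi>] .
  have "AE v in \<pi>. norm (\<Sum>i<N. perturbed_t N \<delta> v i) \<le> real N"
    using Pi_F_AE_profiles[OF F \<pi>]
  proof eventually_elim
    case (elim v)
    then have "0 \<le> perturbed_t N \<delta> v i \<and> perturbed_t N \<delta> v i \<le> 1" for i
      using perturbed_t_bounds[OF N \<delta>(1)] \<delta> by simp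
    then show ?case
      using sum_mono[of "{..<N}" "perturbed_t N \<delta> v" "\<lambda>_. 1"] by (simp add: sum_nonneg)
  qed
  moreover have "(\<lambda>v. \<Sum>i<N. perturbed_t N \<delta> v i) \<in> borel_measurable \<pi>"
    by (rule Pi_F_measurable[OF \<pi>]) measurable
  ultimately show int: "integrable \<pi> (\<lambda>v. \<Sum>i<N. perturbed_t N \<delta> v i)"
    by (intro integrable_const_bound) auto
  have bound: "\<bar>spa_share N x + gain N \<delta> x\<bar> \<le> 2" if "0 \<le> x" "x \<le> 1" for x
    using spa_share_le_one[OF N that] spa_share_nonneg[of N x] abs_gain_le_one[OF N \<delta>(1), of x] \<delta>
    by linarith
  have "(\<lambda>x. spa_share N x + gain N \<delta> x) \<in> borel_measurable borel" by measurable
  note sum = Pi_F_integral_sum[OF F \<pi> this bound]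
  have "AE v in \<pi>. (\<Sum>i<N. spa_share N (v i) + gain N \<delta> (v i)) \<le> (\<Sum>i<N. perturbed_t N \<delta> v i)"
    using Pi_F_AE_profiles[OF F \<pi>]
  proof eventually_elim
    case (elim v)
    interpret bid_profile N \<delta> v using N \<delta> elim by unfold_locales
    show ?case by (rule revenue_pointwise)
  qed
  then have "(\<integral>v. (\<Sum>i<N. spa_share N (v i) + gain N \<delta> (v i)) \<partial>\<pi>) \<le> (\<integral>v. (\<Sum>i<N. perturbed_t N \<delta> v i) \<partial>\<pi>)"
    using sum(1) int by (intro integral_mono_AE)
  then show "real N * (\<integral>x. spa_share N x + gain N \<delta> x \<partial>interval_measure F) \<le> revenue N (perturbed_t N \<delta>) \<pi>"
    using sum(2) by (simp add: revenue_def)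
qed

definition diag :: "nat \<Rightarrow> real \<Rightarrow> (nat \<Rightarrow> real)" where
  "diag N x = (\<lambda>i\<in>{..<N}. x)"

definition comonotone :: "nat \<Rightarrow> (real \<Rightarrow> real) \<Rightarrow> (nat \<Rightarrow> real) measure" where
  "comonotone N F = distr (interval_measure F) (profile_space N) (diag N)"

lemma measurable_diag: "diag N \<in> measurable (interval_measure F) (profile_space N)"
proof -
  have "diag N \<in> measurable borel (profile_space N)"
    unfolding diag_def profile_space_def by (intro measurable_restrict) auto
  then show ?thesis using measurable_cong_sets[OF sets_interval_measure refl] by blast
qed

lemma comonotone_in_Pi_F:
  assumes F: "cdf_on_unit_with_full_support F"
  shows "comonotone N F \<in> Pi_F N F"
proof -
  interpret real_distribution "interval_measure F" using unit_cdf_interval_measure(1)[OF F] .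
  have "measure (comonotone N F) {v \<in> space (comonotone N F). v i \<le> x} = F x" if i: "i < N" for i x
  proof -
    have "{v \<in> space (profile_space N). v i \<le> x} = (\<lambda>v. v i) -` {..x} \<inter> space (profile_space N)"
      by auto
    also have "\<dots> \<in> sets (profile_space N)" using measurable_coordinate[OF i] by measurable
    finally have "measure (comonotone N F) {v \<in> space (profile_space N). v i \<le> x}
        = measure (interval_measure F) (diag N -` {v \<in> space (profile_space N). v i \<le> x})"
      unfolding comonotone_def by (subst measure_distr[OF measurable_diag]) auto
    also have "diag N -` {v \<in> space (profile_space N). v i \<le> x} = {..x}"
      using measurable_space[OF measurable_diag, of _ F] i by (auto simp: diag_def)
    also have "measure (interval_measure F) {..x} = F x"
      using fun_cong[OF unit_cdf_interval_measure(2)[OF F], of x] by (simp add: cdf_def2)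
    finally show ?thesis by (simp add: comonotone_def)
  qed
  then show ?thesis
    using prob_space_distr[OF measurable_diag] by (auto simp: Pi_F_def comonotone_def)
qed

lemma spa_t_sum_diag:
  assumes N: "N \<ge> 3"
  shows "(\<Sum>i<N. spa_t N (diag N x) i) = real N * spa_share N x"
proof -
  have "diag N x ` {..<N} = {x}"
  proof
    show "{x} \<subseteq> diag N x ` {..<N}" using N image_eqI[of x "diag N x" 0 "{..<N}"] by (simp add: diag_def)
  qed (auto simp: diag_def)
  then have top: "top_val N (diag N x) = x" by (simp add: top_val_def)
  then have "n_top N (diag N x) = N" by (simp add: n_top_def diag_def)
  moreover have "real N / (real N - 1) = 1 + beta_exp N" using N by (simp add: beta_exp_def field_simps)
  ultimately have "spa_t N (diag N x) i = spa_share N x" if "i < N" for i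
    using that top N by (simp add: spa_t_def diag_def spa_share_def)
  then show ?thesis by simp
qed

lemma spa_revenue_comonotone:
  assumes N: "N \<ge> 3"
  shows "revenue N (spa_t N) (comonotone N F) \<le> real N * (\<integral>x. spa_share N x \<partial>interval_measure F)"
proof (cases "integrable (comonotone N F) (\<lambda>v. \<Sum>i<N. spa_t N v i)")
  case True
  then have "(\<lambda>v. \<Sum>i<N. spa_t N v i) \<in> borel_measurable (profile_space N)"
    using borel_measurable_integrable by (fastforce simp: comonotone_def)
  then have "revenue N (spa_t N) (comonotone N F)
      = (\<integral>x. (\<Sum>i<N. spa_t N (diag N x) i) \<partial>interval_measure F)"
    unfolding revenue_def comonotone_def by (rule integral_distr[OF measurable_diag])
  then show ?thesis using spa_t_sum_diag[OF N] by simp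
next
  case False
  then show ?thesis
    using integral_nonneg_AE[of "\<lambda>x. spa_share N x" "interval_measure F"] spa_share_nonneg[of N]
    by (simp add: revenue_def not_integrable_integral_eq)
qed

lemma integrable_interval_measure_bounded:
  fixes g :: "real \<Rightarrow> real"
  assumes F: "cdf_on_unit_with_full_support F"
    and g: "g \<in> borel_measurable borel" and bound: "\<And>x. 0 \<le> x \<Longrightarrow> x \<le> 1 \<Longrightarrow> \<bar>g x\<bar> \<le> B"
  shows "integrable (interval_measure F) g"
proof -
  note \<pi> = comonotone_in_Pi_F[OF F, of 1]
  have "integrable (comonotone 1 F) (\<lambda>v. g (v 0))"
    using Pi_F_integral_coordinate(1)[OF F \<pi> _ g bound] by simp
  then have "integrable (distr (comonotone 1 F) borel (\<lambda>v. v 0)) g"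
    using integrable_distr_eq[OF Pi_F_measurable[OF \<pi> measurable_coordinate] g] by simp
  then show ?thesis using Pi_F_marginal[OF F \<pi>] by simp
qed

lemma gain_integral:
  assumes F: "cdf_on_unit_with_full_support F" and \<delta>: "0 < \<delta>" "\<delta> \<le> 1/2"
  shows "(\<integral>x. gain N \<delta> x \<partial>interval_measure F)
      = reward N \<delta> * (F (1/2) - F \<delta>) - spa_share N \<delta> * (F \<delta> - F 0)"
proof -
  interpret real_distribution "interval_measure F" using unit_cdf_interval_measure(1)[OF F] .
  have "gain N \<delta> = (\<lambda>x. reward N \<delta> * indicator {\<delta><..1/2} x - spa_share N \<delta> * indicator {0<..\<delta>} x)"
    using \<delta> by (auto simp: gain_def fun_eq_iff indicator_def)
  moreover have "measure (interval_measure F) {a<..b} = F b - F a" if "a \<le> b" for a b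
    using measure_interval_measure_Ioc[OF that] unit_cdf_props(1,2)[OF F] by (simp add: mono_def)
  ultimately show ?thesis
    using \<delta> by (simp add: integrable_real_indicator emeasure_eq_measure)
qed

lemma exists_gain_integral_pos:
  assumes N: "N \<ge> 3" and F: "cdf_on_unit_with_full_support F"
  obtains \<delta> where "0 < \<delta>" "\<delta> \<le> 1/8" "0 < (\<integral>x. gain N \<delta> x \<partial>interval_measure F)"
proof -
  define D where "D = F (1/2) - F (1/8)"
  have "F (5/16 - 3/16) < F (5/16 + 3/16)" using unit_cdf_props(7)[OF F, of "5/16" "3/16"] by simp
  then have D: "0 < D" by (simp add: D_def)
  define \<epsilon> where "\<epsilon> = D / (32 * real N * (real N - 1))"
  have \<epsilon>: "0 < \<epsilon>" using D N by (simp add: \<epsilon>_def)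
  have "(F \<longlongrightarrow> F 0) (at_right 0)" using unit_cdf_props(2)[OF F, of 0] by (simp add: continuous_within)
  then have "eventually (\<lambda>y. dist (F y) (F 0) < \<epsilon>) (at_right 0)" using \<epsilon> by (rule tendstoD)
  then obtain b where b: "0 < b" "\<And>y. 0 < y \<Longrightarrow> y < b \<Longrightarrow> dist (F y) (F 0) < \<epsilon>"
    unfolding eventually_at_right_field by auto
  define \<delta> where "\<delta> = min (b / 2) (1/8)"
  have \<delta>: "0 < \<delta>" "\<delta> \<le> 1/8" "\<delta> < b" using b by (auto simp: \<delta>_def)
  have mono: "F x \<le> F y" if "x \<le> y" for x y using unit_cdf_props(1)[OF F] that by (simp add: mono_def)
  have near: "F \<delta> - F 0 < \<epsilon>" using b(2)[OF \<delta>(1,3)] mono[of 0 \<delta>] \<delta> by (simp add: dist_real_def)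
  have "\<epsilon> \<le> (F (1/2) - F \<delta>) / (32 * real N * (real N - 1))"
    unfolding \<epsilon>_def D_def using mono[of \<delta> "1/8"] \<delta> N by (intro divide_right_mono) auto
  then have "spa_share N \<delta> * (F \<delta> - F 0) < spa_share N \<delta> * ((F (1/2) - F \<delta>) / (32 * real N * (real N - 1)))"
    using near \<delta> N by (intro mult_strict_left_mono) (auto simp: spa_share_def)
  also have "\<dots> = reward N \<delta> * (F (1/2) - F \<delta>)"
    by (simp add: reward_def spa_share_def field_simps)
  finally have "spa_share N \<delta> * (F \<delta> - F 0) < reward N \<delta> * (F (1/2) - F \<delta>)" .
  then show ?thesis using that[OF \<delta>(1,2)] gain_integral[OF F \<delta>(1)] \<delta> by simp
qed

lemma perturbed_worst_revenue_ge:
  assumes N: "N \<ge> 3" and \<delta>: "0 < \<delta>" "\<delta> \<le> 1/8" and F: "cdf_on_unit_with_full_support F"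
  shows "ereal (real N * ((\<integral>x. spa_share N x \<partial>interval_measure F) + (\<integral>x. gain N \<delta> x \<partial>interval_measure F)))
    \<le> worst_revenue N F (perturbed_t N \<delta>)"
proof -
  have "(\<integral>x. spa_share N x + gain N \<delta> x \<partial>interval_measure F)
      = (\<integral>x. spa_share N x \<partial>interval_measure F) + (\<integral>x. gain N \<delta> x \<partial>interval_measure F)"
    using spa_share_le_one[OF N] spa_share_nonneg abs_gain_le_one[OF N \<delta>(1)] \<delta>
    by (intro Bochner_Integration.integral_add integrable_interval_measure_bounded[OF F]) auto
  then show ?thesis
    unfolding worst_revenue_def using perturbed_revenue_ge(2)[OF N \<delta> F] by (intro INF_greatest) simp
qed

lemma spa_worst_revenue_le:
  assumes N: "N \<ge> 3" and F: "cdf_on_unit_with_full_support F"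
  shows "worst_revenue N F (spa_t N) \<le> ereal (real N * (\<integral>x. spa_share N x \<partial>interval_measure F))"
  unfolding worst_revenue_def
  by (rule INF_lower2[OF comonotone_in_Pi_F[OF F]]) (use spa_revenue_comonotone[OF N] in simp)

theorem corollary2:
  fixes N :: nat and F :: "real \<Rightarrow> real"
  assumes "N \<ge> 3"
    and "cdf_on_unit_with_full_support F"
  shows "\<exists>q t. admissible N q t \<and>
           (\<forall>\<pi>\<in>Pi_F N F. integrable \<pi> (\<lambda>v. \<Sum>i<N. t v i)) \<and>
           worst_revenue N F t > worst_revenue N F (spa_t N)"
proof -
  note N = assms(1) and F = assms(2)
  obtain \<delta> where \<delta>: "0 < \<delta>" "\<delta> \<le> 1/8" and gain: "0 < (\<integral>x. gain N \<delta> x \<partial>interval_measure F)"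
    using exists_gain_integral_pos[OF N F] by blast
  have "worst_revenue N F (spa_t N) \<le> ereal (real N * (\<integral>x. spa_share N x \<partial>interval_measure F))"
    using spa_worst_revenue_le[OF N F] .
  also have "\<dots> < ereal (real N * ((\<integral>x. spa_share N x \<partial>interval_measure F)
      + (\<integral>x. gain N \<delta> x \<partial>interval_measure F)))"
    using gain N by simp
  also have "\<dots> \<le> worst_revenue N F (perturbed_t N \<delta>)"
    using perturbed_worst_revenue_ge[OF N \<delta> F] .
  finally show ?thesis
    using perturbed_admissible[OF N \<delta>(1)] perturbed_revenue_ge(1)[OF N \<delta> F] \<delta> by auto
qed

end
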